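(* Suppose all assumptions of the previous result hold, namely: (A1)–(A4); $P^\star\in\Pi_{K^\star}\setminus\Pi_{K^\star-1}$, $K^\star<\infty$; for every $\theta\in\Theta_\infty$, $H(P_\theta|P^\star)<\infty$ and $p_\theta\ell_\theta\in L^1(\mu)$; $\{\ell_\theta:\theta\in\Theta_\infty\}\subset\mathcal L_\tau(P^\star)$; for every $K$, every $Q\in\mathcal Q$ and every small $\varepsilon>0$ there is a finite $T\subset\Theta_K$ with $\sup_{\theta\in\Theta_K}\min_{t\in T}|Q\ell_\theta-Q\ell_t|\le\varepsilon$; $u-l\in\mathcal M_\tau(P^\star)$; and for every $K\le K^\star$, $\theta\mapsto\ell_\theta(z)$ is differentiable on the interior of $\Theta_K$ with derivative $\dot\ell_\theta$ whose coordinates lie in $\mathcal M_\tau(P^\star)$ and $|\ell_{\theta+h}-\ell_\theta-\dot\ell_\theta^Th|\le F\cdot o(h)$ for some $F\in\mathcal L_\tau(P^\star)$. Suppose moreover that $\Pi_{K^\star}$ is an exponential model: $\mathcal Z\subset\mathbb R^q$, $\mu$ is Lebesgue measure, and $p_\theta(z)=h(z)\exp(\theta^Tt(z)-\phi(\theta))$ for $\theta\in\Theta_{K^\star}$, where $t:\mathcal Z\to\mathbb R^{K^\star}$ and $h\ge0$ are measurable, $\phi(\theta)=\log\int h\,e^{\theta^Tt}d\mu$, and $\Theta_{K^\star}$ is a convex subset of the (open) natural parameter space $\{\theta\in\mathbb R^{K^\star}:\int h\,e^{\theta^Tt}d\mu<\infty\}$ (with $\Theta_K\subset\Theta_{K^\star}$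 for $K<K^\star$). Then $$\limsup_{n\to\infty}n^{-1}\log P^\star\{\widehat K_n^G<K^\star\}\le-H(\Pi_{K^\star-1}|P^\star).$$
   Context: Setting: $(\mathcal Z,\mathcal F)$ is a Polish space with its Borel $\sigma$-field and $\mu$ a $\sigma$-finite measure on it. $Z_1,Z_2,\dots$ are i.i.d. $\mathcal Z$-valued random variables with common law $P^\star\ll\mu$, density $p^\star$, $\ell^\star=\log p^\star$; $P^\star$ also denotes the law of the whole sequence. $\{(\Theta_K,d)\}_{K\ge1}$ is an increasing (nested) sequence of metric spaces (here subsets of Euclidean spaces with norm distance), $\Theta_\infty=\bigcup_K\Theta_K$; for $\theta\in\Theta_\infty$, $P_\theta$ is a probability measure with density $p_\theta$ w.r.t. $\mu$ and $\ell_\theta=\log p_\theta$. $\Pi_K=\{P_\theta:\theta\in\Theta_K\}$, $\Pi_0=\emptyset$. The order of $P^\star$ is $K^\star=\min\{K:P^\star\in\Pi_K\}$. $\lambda f=\int f\,d\lambda$. $H(P|Q)=\int\log(dP/dQ)\,dP$ if $P\ll Q$ and $+\infty$ otherwise; $H(\Pi|Q)=\inf_{P\in\Pi}H(P|Q)$. Given a penalty $\mathrm{pen}(n,K)>0$, $\mathrm{crit}(n,K)=\sup_{\theta\in\Theta_K}\sum_{i=1}^n\ell_\theta(Z_i)-\mathrm{pen}(n,K)$ and $\widehat K_n^G$ is the smallest maximizer of $K\mapsto\mathrm{crit}(n,K)$. All suprema are assumed measurable. Standing assumptions: (A1) each $(\Theta_K,d)$ is compact and each $\Pi_K$ is compact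 for the weak topology; (A2) for each $z$ and $K$, $\theta\mapsto\ell_\theta(z)$ is continuous on $\Theta_K$; (A3) there are $l,u:\mathcal Z\to\mathbb R$ with $u-l\in L^1(P^\star)$, $l\le\ell^\star\le u$ and $l\le\ell_\theta\le u$ for all $\theta\in\Theta_\infty$; (A4) for each $n$, $\mathrm{pen}(n,\cdot)$ is increasing, and for each $K$, $\mathrm{pen}(n,K)\to\infty$ and $\mathrm{pen}(n,K)=o(n)$ as $n\to\infty$. Large-deviation framework: $\tau(s)=e^{|s|}-|s|-1$. $\mathcal L_\tau(P^\star)=\{f:\mathcal Z\to\mathbb R:\exists a>0,\ P^\star\tau(f/a)<\infty\}$ and $\mathcal M_\tau(P^\star)=\{f:\forall a>0,\ P^\star\tau(f/a)<\infty\}$; $\mathcal L_\tau(P^\star)$ is a Banach space with the norm $\|f\|_\tau=\inf\{a>0:P^\star\tau(f/a)\le1\}$, and $\mathcal L'_\tau(P^\star)$ is its topological dual. $\mathcal P=\{p^{-1}\sum_{i=1}^p\delta_{z_i}:p\ge1,z_i\in\mathcal Z\}$. $\mathcal Q=\{Q\in\mathcal L'_\tau(P^\star):Q\ge0,\ Q1=1\}\cup\mathcal P$. *)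

theory Defs
  imports "HOL-Analysis.Analysis"
begin

text \<open>Parameters are represented as finitely supported vectors nat => real;
  a parameter of R^d is a function vanishing at all indices >= d.\<close>

definition fdist :: "(nat \<Rightarrow> real) \<Rightarrow> (nat \<Rightarrow> real) \<Rightarrow> real" where
  "fdist x y = sqrt (\<Sum>i\<in>{i. x i \<noteq> y i}. (x i - y i)^2)"

definition in_Rd :: "nat \<Rightarrow> (nat \<Rightarrow> real) \<Rightarrow> bool" where
  "in_Rd d x \<longleftrightarrow> (\<forall>i\<ge>d. x i = 0)"

definition fnorm :: "(nat \<Rightarrow> real) \<Rightarrow> real" where
  "fnorm x = fdist x (\<lambda>_. 0)"

definition fcompact :: "(nat \<Rightarrow> real) set \<Rightarrow> bool" where
  "fcompact S \<longleftrightarrow> (\<forall>x :: nat \<Rightarrow> nat \<Rightarrow> real. (\<forall>n. x n \<in> S) \<longrightarrow>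
     (\<exists>l\<in>S. \<exists>r. strict_mono r \<and> (\<lambda>n. fdist (x (r n)) l) \<longlonglongrightarrow> 0))"

definition fcontinuous_on :: "(nat \<Rightarrow> real) set \<Rightarrow> ((nat \<Rightarrow> real) \<Rightarrow> real) \<Rightarrow> bool" where
  "fcontinuous_on S g \<longleftrightarrow> (\<forall>x\<in>S. \<forall>e>0. \<exists>\<delta>>0. \<forall>y\<in>S. fdist x y < \<delta> \<longrightarrow> \<bar>g y - g x\<bar> < e)"

definition rinterior :: "nat \<Rightarrow> (nat \<Rightarrow> real) set \<Rightarrow> (nat \<Rightarrow> real) set" where
  "rinterior d S = {x\<in>S. \<exists>e>0. \<forall>y. in_Rd d y \<and> fdist x y < e \<longrightarrow> y \<in> S}"

definition fconvex :: "(nat \<Rightarrow> real) set \<Rightarrow> bool" where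
  "fconvex S \<longleftrightarrow> (\<forall>x\<in>S. \<forall>y\<in>S. \<forall>u::real. 0 \<le> u \<and> u \<le> 1 \<longrightarrow> (\<lambda>i. u * x i + (1 - u) * y i) \<in> S)"

definition weak_conv_on :: "'a::topological_space set \<Rightarrow> (nat \<Rightarrow> 'a measure) \<Rightarrow> 'a measure \<Rightarrow> bool" where
  "weak_conv_on Z Ms M \<longleftrightarrow> (\<forall>f :: 'a \<Rightarrow> real. continuous_on Z f \<and> bounded (f ` Z) \<longrightarrow>
      (\<lambda>n. integral\<^sup>L (Ms n) f) \<longlonglongrightarrow> integral\<^sup>L M f)"

definition weak_compact :: "'a::topological_space set \<Rightarrow> 'a measure set \<Rightarrow> bool" where
  "weak_compact Z S \<longleftrightarrow> (\<forall>Ms :: nat \<Rightarrow> 'a measure. (\<forall>n. Ms n \<in> S) \<longrightarrow>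
      (\<exists>M\<in>S. \<exists>r. strict_mono r \<and> weak_conv_on Z (Ms \<circ> r) M))"

definition relent :: "'a measure \<Rightarrow> 'a measure \<Rightarrow> ereal" where
  "relent P Q = (if sets P = sets Q \<and> absolutely_continuous Q P then
      enn2ereal (\<integral>\<^sup>+x. ennreal (max 0 (ln (enn2real (RN_deriv Q P x)))) \<partial>P)
    - enn2ereal (\<integral>\<^sup>+x. ennreal (max 0 (- ln (enn2real (RN_deriv Q P x)))) \<partial>P)
    else \<infinity>)"

definition tau :: "real \<Rightarrow> real" where
  "tau s = exp \<bar>s\<bar> - \<bar>s\<bar> - 1"

definition Ltau :: "'a measure \<Rightarrow> ('a \<Rightarrow> real) \<Rightarrow> bool" where
  "Ltau M f \<longleftrightarrow> f \<in> borel_measurable M \<and> (\<exists>a>0. (\<integral>\<^sup>+z. ennreal (tau (f z / a)) \<partial>M) < \<infinity>)"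

definition Mtau :: "'a measure \<Rightarrow> ('a \<Rightarrow> real) \<Rightarrow> bool" where
  "Mtau M f \<longleftrightarrow> f \<in> borel_measurable M \<and> (\<forall>a>0. (\<integral>\<^sup>+z. ennreal (tau (f z / a)) \<partial>M) < \<infinity>)"

definition tau_norm :: "'a measure \<Rightarrow> ('a \<Rightarrow> real) \<Rightarrow> real" where
  "tau_norm M f = Inf {a. a > 0 \<and> (\<integral>\<^sup>+z. ennreal (tau (f z / a)) \<partial>M) \<le> 1}"

text \<open>Elements Q of the topological dual of L_tau(M) with Q >= 0 and Q 1 = 1
  (functionals acting on representatives).\<close>
definition Ltau_dual_prob :: "'a measure \<Rightarrow> (('a \<Rightarrow> real) \<Rightarrow> real) \<Rightarrow> bool" where
  "Ltau_dual_prob M Q \<longleftrightarrow>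
     (\<forall>f g. Ltau M f \<and> Ltau M g \<longrightarrow> Q (\<lambda>z. f z + g z) = Q f + Q g) \<and>
     (\<forall>f c. Ltau M f \<longrightarrow> Q (\<lambda>z. c * f z) = c * Q f) \<and>
     (\<exists>C. \<forall>f. Ltau M f \<longrightarrow> \<bar>Q f\<bar> \<le> C * tau_norm M f) \<and>
     (\<forall>f. Ltau M f \<and> (AE z in M. 0 \<le> f z) \<longrightarrow> 0 \<le> Q f) \<and>
     Q (\<lambda>_. 1) = 1"

definition empirical :: "'a set \<Rightarrow> (('a \<Rightarrow> real) \<Rightarrow> real) \<Rightarrow> bool" where
  "empirical Z Q \<longleftrightarrow> (\<exists>m::nat. m \<ge> 1 \<and> (\<exists>zs. (\<forall>i<m. zs i \<in> Z) \<and>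
      (\<forall>f. Q f = (\<Sum>i<m. f (zs i)) / real m)))"

definition Qset :: "'a measure \<Rightarrow> 'a set \<Rightarrow> (('a \<Rightarrow> real) \<Rightarrow> real) set" where
  "Qset M Z = {Q. Ltau_dual_prob M Q} \<union> {Q. empirical Z Q}"

definition crit :: "(nat \<Rightarrow> (nat \<Rightarrow> real) set) \<Rightarrow> ((nat \<Rightarrow> real) \<Rightarrow> 'a \<Rightarrow> real)
    \<Rightarrow> (nat \<Rightarrow> nat \<Rightarrow> real) \<Rightarrow> nat \<Rightarrow> (nat \<Rightarrow> 'a) \<Rightarrow> nat \<Rightarrow> ereal" where
  "crit \<Theta> p pen n zs K = (SUP \<theta>\<in>\<Theta> K. ereal (\<Sum>i<n. ln (p \<theta> (zs i)))) - ereal (pen n K)"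

definition is_Khat :: "(nat \<Rightarrow> (nat \<Rightarrow> real) set) \<Rightarrow> ((nat \<Rightarrow> real) \<Rightarrow> 'a \<Rightarrow> real)
    \<Rightarrow> (nat \<Rightarrow> nat \<Rightarrow> real) \<Rightarrow> nat \<Rightarrow> (nat \<Rightarrow> 'a) \<Rightarrow> nat \<Rightarrow> bool" where
  "is_Khat \<Theta> p pen n zs K \<longleftrightarrow> 1 \<le> K \<and>
     (\<forall>K'\<ge>1. crit \<Theta> p pen n zs K' \<le> crit \<Theta> p pen n zs K) \<and>
     (\<forall>K'. 1 \<le> K' \<and> K' < K \<longrightarrow> crit \<Theta> p pen n zs K' < crit \<Theta> p pen n zs K)"

definition eln :: "real \<Rightarrow> ereal" where
  "eln x = (if x = 0 then -\<infinity> else ereal (ln x))"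

end

(*
  If the selected order is below Kstar, some parameter of the compact set Theta (Kstar - 1)
  nearly maximises the likelihood over Theta Kstar; in particular its likelihood beats that of
  every mixture mix s thetastar theta' with the true parameter.  In an exponential model the
  log-likelihood is affine in the parameter up to the log-partition function phi, so this
  forces the log-likelihood ratio of theta' against thetastar to exceed n J_s(theta') / s - o(n),
  where J_s is the Jensen gap of phi at weight s; and J_s(y) / s tends to KL(P_y | Pstar) as s -> 0.
  Near a fixed y the log-likelihood ratio of theta' is dominated by that of y plus
  rho |t(z) - t(z0)|, whose exponential moment under Pstar is close to 1 because y is interior to
  the natural parameter space.  A Chernoff bound on each of finitely many balls covering
  Theta (Kstar - 1) gives Pstar(underfit) <= exp (- n (H - eps)) for large n, where H is the
  infimum of KL(P_theta | Pstar) over Theta (Kstar - 1).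
*)

theory Submission
  imports Defs
begin

section \<open>Euclidean distance on finitely supported parameters\<close>

definition mix :: "real \<Rightarrow> (nat \<Rightarrow> real) \<Rightarrow> (nat \<Rightarrow> real) \<Rightarrow> nat \<Rightarrow> real" where
  "mix s x y = (\<lambda>i. s * x i + (1 - s) * y i)"

lemma fconvex_mix: "fconvex S \<Longrightarrow> x \<in> S \<Longrightarrow> y \<in> S \<Longrightarrow> 0 \<le> s \<Longrightarrow> s \<le> 1 \<Longrightarrow> mix s x y \<in> S"
  unfolding fconvex_def mix_def by blast

lemma in_Rd_mix: "in_Rd d x \<Longrightarrow> in_Rd d y \<Longrightarrow> in_Rd d (mix s x y)"
  unfolding in_Rd_def mix_def by simp

lemma fdist_eq_sum:
  assumes "in_Rd d x" "in_Rd d y"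
  shows "fdist x y = sqrt (\<Sum>i<d. (x i - y i)\<^sup>2)"
proof -
  have "{i. x i \<noteq> y i} \<subseteq> {..<d}"
  proof
    fix i assume "i \<in> {i. x i \<noteq> y i}"
    then show "i \<in> {..<d}" using assms unfolding in_Rd_def by (cases "i < d") auto
  qed
  then have "(\<Sum>i\<in>{i. x i \<noteq> y i}. (x i - y i)\<^sup>2) = (\<Sum>i<d. (x i - y i)\<^sup>2)"
    by (intro sum.mono_neutral_left) auto
  then show ?thesis unfolding fdist_def by simp
qed

lemma fdist_commute: "fdist x y = fdist y x"
  unfolding fdist_def by (simp add: eq_commute power2_commute)

lemma fdist_nonneg: "0 \<le> fdist x y"
  unfolding fdist_def by (simp add: sum_nonneg)

lemma fdist_triangle:
  assumes "in_Rd d x" "in_Rd d y" "in_Rd d z"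
  shows "fdist x z \<le> fdist x y + fdist y z"
proof -
  have "L2_set (\<lambda>i. (x i - y i) + (y i - z i)) {..<d}
      \<le> L2_set (\<lambda>i. x i - y i) {..<d} + L2_set (\<lambda>i. y i - z i) {..<d}"
    by (rule L2_set_triangle_ineq)
  then show ?thesis
    using assms by (simp add: fdist_eq_sum[of d] L2_set_def)
qed

lemma fdist_eq_0_iff:
  assumes "in_Rd d x" "in_Rd d y"
  shows "fdist x y = 0 \<longleftrightarrow> x = y"
proof -
  have "fdist x y = 0 \<longleftrightarrow> (\<forall>i<d. x i = y i)"
    using assms by (auto simp: fdist_eq_sum[of d] sum_nonneg_eq_0_iff)
  also have "\<dots> \<longleftrightarrow> x = y"
  proof
    assume "\<forall>i<d. x i = y i"
    then have "x i = y i" for i using assms unfolding in_Rd_def by (cases "i < d") auto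
    then show "x = y" by blast
  qed simp
  finally show ?thesis .
qed

lemma abs_diff_le_fdist:
  assumes "in_Rd d x" "in_Rd d y"
  shows "\<bar>x i - y i\<bar> \<le> fdist x y"
proof (cases "i < d")
  case True
  then have "(x i - y i)\<^sup>2 \<le> (\<Sum>j<d. (x j - y j)\<^sup>2)"
    by (intro member_le_sum) auto
  then show ?thesis
    using assms by (simp add: fdist_eq_sum[of d] real_le_rsqrt)
next
  case False
  then show ?thesis using assms unfolding in_Rd_def by (simp add: fdist_nonneg)
qed

lemma fdist_mix_le:
  assumes "in_Rd d x" "in_Rd d y" "in_Rd d w" "0 \<le> s" "s \<le> 1"
  shows "fdist (mix s w x) (mix s w y) \<le> fdist x y"
proof -
  have "(\<Sum>i<d. (mix s w x i - mix s w y i)\<^sup>2) \<le> (\<Sum>i<d. (x i - y i)\<^sup>2)"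
  proof (intro sum_mono)
    fix i
    have "(1 - s)\<^sup>2 * (x i - y i)\<^sup>2 \<le> 1 * (x i - y i)\<^sup>2"
      using assms(4,5) by (intro mult_right_mono) (auto simp: power_le_one)
    moreover have "mix s w x i - mix s w y i = (1 - s) * (x i - y i)"
      by (simp add: mix_def algebra_simps)
    ultimately show "(mix s w x i - mix s w y i)\<^sup>2 \<le> (x i - y i)\<^sup>2"
      by (simp add: power_mult_distrib)
  qed
  then show ?thesis
    using assms by (simp add: fdist_eq_sum[of d] in_Rd_mix)
qed

lemma Metric_space_Rd: "Metric_space {x. in_Rd d x} fdist"
  by unfold_locales (auto simp: fdist_nonneg fdist_commute fdist_eq_0_iff intro: fdist_triangle)

lemma fcompact_imp_compactin:
  assumes "fcompact S" "\<And>x. x \<in> S \<Longrightarrow> in_Rd d x"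
  shows "compactin (Metric_space.mtopology {x. in_Rd d x} fdist) S"
proof -
  interpret Rd: Metric_space "{x. in_Rd d x}" fdist by (rule Metric_space_Rd)
  have "\<exists>l r. l \<in> S \<and> strict_mono r \<and> limitin Rd.mtopology (\<sigma> \<circ> r) l sequentially"
    if "range \<sigma> \<subseteq> S" for \<sigma> :: "nat \<Rightarrow> nat \<Rightarrow> real"
  proof -
    have "\<forall>n. \<sigma> n \<in> S" using that by auto
    then obtain l r where "l \<in> S" "strict_mono r" "(\<lambda>n. fdist (\<sigma> (r n)) l) \<longlonglongrightarrow> 0"
      using assms(1)[unfolded fcompact_def, rule_format, of \<sigma>] by blast
    then show ?thesis
      using that assms(2) by (intro exI[of _ l] exI[of _ r]) (auto simp: Rd.limitin_metric_dist_null o_def intro!: always_eventually)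
  qed
  then show ?thesis
    using assms(2) by (auto simp: Rd.compactin_sequentially)
qed

lemma fcompact_finite_ball_cover:
  assumes "fcompact S" "\<And>x. x \<in> S \<Longrightarrow> in_Rd d x" "\<And>x. x \<in> S \<Longrightarrow> \<exists>r>0. G x r"
  obtains T r where "finite T" "T \<subseteq> S" "\<And>y. y \<in> T \<Longrightarrow> 0 < r y \<and> G y (r y)"
    "\<And>\<theta>. \<theta> \<in> S \<Longrightarrow> \<exists>y\<in>T. fdist y \<theta> < r y"
proof -
  interpret Rd: Metric_space "{x. in_Rd d x}" fdist by (rule Metric_space_Rd)
  have "\<forall>x\<in>S. \<exists>r. 0 < r \<and> G x r" using assms(3) by blast
  from bchoice[OF this] obtain r where r: "\<forall>x\<in>S. 0 < r x \<and> G x (r x)" by blast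
  define U where "U = (\<lambda>y. Rd.mball y (r y)) ` S"
  have "S \<subseteq> \<Union>U"
    using r assms(2) by (auto simp: U_def Rd.mball_def)
  moreover have "\<forall>B\<in>U. openin Rd.mtopology B"
    by (simp add: U_def)
  ultimately obtain F where F: "finite F" "F \<subseteq> U" "S \<subseteq> \<Union>F"
    using fcompact_imp_compactin[OF assms(1,2)] unfolding compactin_def by blast
  then obtain T where T: "T \<subseteq> S" "finite T" "F = (\<lambda>y. Rd.mball y (r y)) ` T"
    using finite_subset_image[of F] unfolding U_def by blast
  show ?thesis
  proof (rule that[OF T(2,1)])
    show "0 < r y \<and> G y (r y)" if "y \<in> T" for y using r T(1) that by blast
    show "\<exists>y\<in>T. fdist y \<theta> < r y" if "\<theta> \<in> S" for \<theta>
      using that F(3) T(3) by (auto simp: Rd.mball_def)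
  qed
qed

section \<open>Relative entropy of densities\<close>

lemma AE_RN_deriv_density_density:
  fixes M :: "'a measure" and p q :: "'a \<Rightarrow> real"
  assumes p: "p \<in> borel_measurable M" and q: "q \<in> borel_measurable M"
    and q_pos: "\<And>z. z \<in> space M \<Longrightarrow> 0 < q z" and q_fin: "(\<integral>\<^sup>+z. ennreal (q z) \<partial>M) < \<infinity>"
  shows "AE z in density M p. RN_deriv (density M q) (density M p) z = ennreal (p z / q z)"
proof -
  interpret Q: finite_measure "density M q"
    using q q_fin by (intro finite_measureI) (simp add: emeasure_density)
  have "density (density M q) (\<lambda>z. ennreal (p z / q z))
      = density M (\<lambda>z. ennreal (q z) * ennreal (p z / q z))"
    using p q by (intro density_density_eq) auto
  also have "\<dots> = density M p"
  proof (intro density_cong AE_I2)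
    fix z assume "z \<in> space M"
    then show "ennreal (q z) * ennreal (p z / q z) = ennreal (p z)"
      using q_pos[of z] by (simp add: ennreal_mult'[symmetric])
  qed (use p q in auto)
  finally have "AE z in density M q. ennreal (p z / q z) = RN_deriv (density M q) (density M p) z"
    using p q by (intro Q.RN_deriv_unique) auto
  then have "AE z in M. 0 < ennreal (q z) \<longrightarrow> ennreal (p z / q z) = RN_deriv (density M q) (density M p) z"
    using q by (simp add: AE_density)
  then have "AE z in M. RN_deriv (density M q) (density M p) z = ennreal (p z / q z)"
    using AE_space by eventually_elim (use q_pos in auto)
  then show ?thesis
    using p by (subst AE_density) (auto elim: eventually_mono)
qed

lemma absolutely_continuous_density_density:
  fixes M :: "'a measure" and p q :: "'a \<Rightarrow> real"
  assumes p: "p \<in> borel_measurable M" and q: "q \<in> borel_measurable M"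
    and q_pos: "\<And>z. z \<in> space M \<Longrightarrow> 0 < q z"
  shows "absolutely_continuous (density M q) (density M p)"
proof (unfold absolutely_continuous_def, rule subsetI)
  fix A assume "A \<in> null_sets (density M q)"
  then have A: "A \<in> sets M" "AE z in M. z \<in> A \<longrightarrow> ennreal (q z) = 0"
    using q by (auto simp: null_sets_density_iff)
  have "AE z in M. z \<in> A \<longrightarrow> ennreal (p z) = 0"
    using A(2) AE_space by eventually_elim (use q_pos in force)
  then show "A \<in> null_sets (density M p)"
    using A(1) p by (simp add: null_sets_density_iff)
qed

lemma relent_density_eq_nn_integrals:
  fixes M :: "'a measure" and p q :: "'a \<Rightarrow> real"
  assumes p: "p \<in> borel_measurable M" and q: "q \<in> borel_measurable M"
    and p_pos: "\<And>z. z \<in> space M \<Longrightarrow> 0 < p z" and q_pos: "\<And>z. z \<in> space M \<Longrightarrow> 0 < q z"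
    and q_fin: "(\<integral>\<^sup>+z. ennreal (q z) \<partial>M) < \<infinity>"
  defines "f z \<equiv> p z * (ln (p z) - ln (q z))"
  shows "relent (density M p) (density M q)
    = enn2ereal (\<integral>\<^sup>+z. ennreal (f z) \<partial>M) - enn2ereal (\<integral>\<^sup>+z. ennreal (- f z) \<partial>M)"
proof -
  have RN: "AE z in density M p. RN_deriv (density M q) (density M p) z = ennreal (p z / q z)"
    by (intro AE_RN_deriv_density_density p q q_pos q_fin)
  have parts: "(\<integral>\<^sup>+z. ennreal (max 0 (c * ln (enn2real (RN_deriv (density M q) (density M p) z)))) \<partial>density M p)
      = (\<integral>\<^sup>+z. ennreal (c * f z) \<partial>M)" for c :: real
  proof -
    have "AE z in density M p. ennreal (max 0 (c * ln (enn2real (RN_deriv (density M q) (density M p) z))))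
        = ennreal (c * (ln (p z) - ln (q z)))"
      using RN AE_space
    proof eventually_elim
      case (elim z)
      then have "0 < p z" "0 < q z" using p_pos q_pos by auto
      then show ?case using elim(1) by (simp add: ennreal_max_0 ln_div)
    qed
    then have "(\<integral>\<^sup>+z. ennreal (max 0 (c * ln (enn2real (RN_deriv (density M q) (density M p) z)))) \<partial>density M p)
        = (\<integral>\<^sup>+z. ennreal (c * (ln (p z) - ln (q z))) \<partial>density M p)"
      by (rule nn_integral_cong_AE)
    also have "\<dots> = (\<integral>\<^sup>+z. ennreal (p z) * ennreal (c * (ln (p z) - ln (q z))) \<partial>M)"
      using p q by (intro nn_integral_density) auto
    also have "\<dots> = (\<integral>\<^sup>+z. ennreal (c * f z) \<partial>M)"
    proof (intro nn_integral_cong)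
      fix z assume "z \<in> space M"
      then have "ennreal (p z) * ennreal (c * (ln (p z) - ln (q z))) = ennreal (p z * (c * (ln (p z) - ln (q z))))"
        using p_pos[of z] by (simp add: ennreal_mult')
      then show "ennreal (p z) * ennreal (c * (ln (p z) - ln (q z))) = ennreal (c * f z)"
        by (simp add: f_def algebra_simps)
    qed
    finally show ?thesis .
  qed
  show ?thesis
    using parts[of 1] parts[of "-1"] absolutely_continuous_density_density[OF p q q_pos]
    by (simp add: relent_def)
qed

lemma relent_density_eq_integral:
  fixes M :: "'a measure" and p q :: "'a \<Rightarrow> real"
  assumes p: "p \<in> borel_measurable M" and q: "q \<in> borel_measurable M"
    and p_pos: "\<And>z. z \<in> space M \<Longrightarrow> 0 < p z" and q_pos: "\<And>z. z \<in> space M \<Longrightarrow> 0 < q z"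
    and q_int: "(\<integral>\<^sup>+z. ennreal (q z) \<partial>M) = 1"
    and fin: "relent (density M p) (density M q) < \<infinity>"
  defines "f z \<equiv> p z * (ln (p z) - ln (q z))"
  shows "integrable M f" and "relent (density M p) (density M q) = ereal (\<integral>z. f z \<partial>M)"
proof -
  have f[measurable]: "f \<in> borel_measurable M"
    using p q unfolding f_def by measurable
  have relent_eq: "relent (density M p) (density M q)
      = enn2ereal (\<integral>\<^sup>+z. ennreal (f z) \<partial>M) - enn2ereal (\<integral>\<^sup>+z. ennreal (- f z) \<partial>M)"
  proof -
    have "(\<integral>\<^sup>+z. ennreal (q z) \<partial>M) < \<infinity>"
      using q_int by simp
    then show ?thesis
      unfolding f_def by (intro relent_density_eq_nn_integrals p q p_pos q_pos)
  qed
  have "(\<integral>\<^sup>+z. ennreal (- f z) \<partial>M) \<le> (\<integral>\<^sup>+z. ennreal (q z) \<partial>M)"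
  proof (intro nn_integral_mono ennreal_leI)
    fix z assume z: "z \<in> space M"
    have "- f z = p z * ln (q z / p z)"
      using p_pos[OF z] q_pos[OF z] by (simp add: f_def ln_div algebra_simps)
    also have "\<dots> \<le> p z * (q z / p z - 1)"
      using p_pos[OF z] q_pos[OF z] by (intro mult_left_mono ln_le_minus_one) auto
    also have "\<dots> \<le> q z"
      using p_pos[OF z] by (simp add: field_simps)
    finally show "- f z \<le> q z" .
  qed
  then have neg_fin: "(\<integral>\<^sup>+z. ennreal (- f z) \<partial>M) \<noteq> \<infinity>"
    using q_int by (auto simp: top_unique)
  then have pos_fin: "(\<integral>\<^sup>+z. ennreal (f z) \<partial>M) \<noteq> \<infinity>"
    using fin relent_eq by auto
  show int: "integrable M f"
    using neg_fin pos_fin by (simp add: real_integrable_def)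
  obtain a b where "(\<integral>\<^sup>+z. ennreal (f z) \<partial>M) = ennreal a" "0 \<le> a"
    "(\<integral>\<^sup>+z. ennreal (- f z) \<partial>M) = ennreal b" "0 \<le> b"
    using neg_fin pos_fin by (metis ennreal_cases infinity_ennreal_def)
  then show "relent (density M p) (density M q) = ereal (integral\<^sup>L M f)"
    by (simp add: relent_eq real_lebesgue_integral_def[OF int])
qed

lemma nn_integral_density_exp_ln_ratio:
  fixes M :: "'a measure" and p q g :: "'a \<Rightarrow> real"
  assumes [measurable]: "p \<in> borel_measurable M" "q \<in> borel_measurable M" "g \<in> borel_measurable M"
    and p_pos: "\<And>z. z \<in> space M \<Longrightarrow> 0 < p z" and q_pos: "\<And>z. z \<in> space M \<Longrightarrow> 0 < q z"
  shows "(\<integral>\<^sup>+z. ennreal (exp (ln (q z) - ln (p z) + g z)) \<partial>density M p)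
    = (\<integral>\<^sup>+z. ennreal (q z * exp (g z)) \<partial>M)"
proof -
  have "(\<integral>\<^sup>+z. ennreal (exp (ln (q z) - ln (p z) + g z)) \<partial>density M p)
      = (\<integral>\<^sup>+z. ennreal (p z) * ennreal (exp (ln (q z) - ln (p z) + g z)) \<partial>M)"
    by (intro nn_integral_density) auto
  also have "\<dots> = (\<integral>\<^sup>+z. ennreal (q z * exp (g z)) \<partial>M)"
  proof (intro nn_integral_cong)
    fix z assume z: "z \<in> space M"
    have "p z * exp (ln (q z) - ln (p z) + g z) = q z * exp (g z)"
      using p_pos[OF z] q_pos[OF z] by (simp add: exp_add exp_diff)
    then show "ennreal (p z) * ennreal (exp (ln (q z) - ln (p z) + g z)) = ennreal (q z * exp (g z))"
      using p_pos[OF z] by (simp flip: ennreal_mult)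
  qed
  finally show ?thesis .
qed

section \<open>Exponential moments and Chernoff bounds\<close>

lemma tendsto_one_minus_exp_div:
  fixes x :: real
  shows "((\<lambda>s. (1 - exp (- s * x)) / s) \<longlongrightarrow> x) (at_right 0)"
proof -
  have "((\<lambda>s. exp (- s * x)) has_field_derivative - x) (at 0 within {0<..})"
    by (auto intro!: derivative_eq_intros)
  then have "((\<lambda>s. (exp (- s * x) - 1) / s) \<longlongrightarrow> - x) (at_right 0)"
    by (simp add: has_field_derivative_iff)
  then have "((\<lambda>s. - ((exp (- s * x) - 1) / s)) \<longlongrightarrow> - (- x)) (at_right 0)"
    by (rule tendsto_minus)
  then show ?thesis
    by (simp add: minus_divide_left)
qed

lemma abs_one_minus_exp_div_le:
  fixes s x :: real
  assumes s: "0 < s" "s \<le> 1"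
  shows "\<bar>(1 - exp (- s * x)) / s\<bar> \<le> \<bar>x\<bar> + exp (- x)"
proof (cases "x \<ge> 0")
  case True
  have "0 \<le> 1 - exp (- s * x)" "1 - exp (- s * x) \<le> s * x"
    using True s exp_ge_add_one_self[of "- s * x"] by auto
  then have "\<bar>(1 - exp (- s * x)) / s\<bar> \<le> x"
    using s by (simp add: divide_le_eq mult.commute)
  then show ?thesis using True by (smt (verit) exp_gt_zero)
next
  case False
  have "exp ((1 - s) *\<^sub>R 0 + s *\<^sub>R (- x)) \<le> (1 - s) * exp 0 + s * exp (- x)"
    using s by (intro convex_onD[OF exp_convex]) auto
  then have "exp (- s * x) - 1 \<le> s * (exp (- x) - 1)"
    by (simp add: algebra_simps)
  moreover have "1 \<le> exp (- s * x)"
    using False s by (simp add: mult_pos_neg less_imp_le)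
  ultimately have "\<bar>(1 - exp (- s * x)) / s\<bar> \<le> exp (- x) - 1"
    using s by (simp add: abs_div_pos pos_divide_le_eq mult.commute)
  then show ?thesis by simp
qed

lemma tendsto_integral_one_minus_exp_div:
  fixes M :: "'a measure" and f X :: "'a \<Rightarrow> real"
  assumes [measurable]: "f \<in> borel_measurable M" "X \<in> borel_measurable M"
    and int: "integrable M (\<lambda>z. f z * X z)" "integrable M (\<lambda>z. f z * exp (- X z))"
  shows "((\<lambda>s. \<integral>z. f z * ((1 - exp (- s * X z)) / s) \<partial>M) \<longlongrightarrow> (\<integral>z. f z * X z \<partial>M)) (at_right 0)"
proof (rule tendsto_at_right_sequentially[of 0 1])
  fix S :: "nat \<Rightarrow> real" assume S: "\<And>n. 0 < S n" "\<And>n. S n < 1" "S \<longlonglongrightarrow> 0"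
  moreover have "S n \<noteq> 0" for n
    using S(1)[of n] by linarith
  ultimately have S_at_right: "filterlim S (at_right 0) sequentially"
    by (simp add: filterlim_at)
  show "(\<lambda>n. \<integral>z. f z * ((1 - exp (- S n * X z)) / S n) \<partial>M) \<longlonglongrightarrow> (\<integral>z. f z * X z \<partial>M)"
  proof (rule integral_dominated_convergence[where w="\<lambda>z. \<bar>f z * X z\<bar> + \<bar>f z * exp (- X z)\<bar>"])
    show "integrable M (\<lambda>z. \<bar>f z * X z\<bar> + \<bar>f z * exp (- X z)\<bar>)"
      using int by auto
    show "AE z in M. (\<lambda>n. f z * ((1 - exp (- S n * X z)) / S n)) \<longlonglongrightarrow> f z * X z"
      by (intro AE_I2 tendsto_mult tendsto_const filterlim_compose[OF tendsto_one_minus_exp_div S_at_right])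
    show "AE z in M. norm (f z * ((1 - exp (- S n * X z)) / S n)) \<le> \<bar>f z * X z\<bar> + \<bar>f z * exp (- X z)\<bar>" for n
    proof (intro AE_I2)
      fix z
      have "\<bar>f z\<bar> * \<bar>(1 - exp (- S n * X z)) / S n\<bar> \<le> \<bar>f z\<bar> * (\<bar>X z\<bar> + exp (- X z))"
        using S(1,2)[of n] by (intro mult_left_mono abs_one_minus_exp_div_le) auto
      then show "norm (f z * ((1 - exp (- S n * X z)) / S n)) \<le> \<bar>f z * X z\<bar> + \<bar>f z * exp (- X z)\<bar>"
        by (simp add: abs_mult distrib_left)
    qed
  qed measurable
qed simp

lemma exp_sum_le_sum_exp_mult:
  fixes b :: "nat \<Rightarrow> real"
  assumes "0 < K"
  shows "exp (\<Sum>i<K. b i) \<le> (\<Sum>i<K. exp (real K * b i))"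
proof -
  have "b ` {..<K} \<noteq> {}"
    using assms by auto
  then have "Max (b ` {..<K}) \<in> b ` {..<K}"
    by (intro Max_in) auto
  then obtain j where j: "j < K" "b j = Max (b ` {..<K})"
    by auto
  then have "b i \<le> b j" if "i < K" for i
    using that by simp
  have "(\<Sum>i<K. b i) \<le> real K * b j"
    using sum_mono[of "{..<K}" b "\<lambda>_. b j"] \<open>\<And>i. i < K \<Longrightarrow> b i \<le> b j\<close> by simp
  then have "exp (\<Sum>i<K. b i) \<le> exp (real K * b j)"
    by simp
  also have "\<dots> \<le> (\<Sum>i<K. exp (real K * b i))"
    using j(1) by (intro member_le_sum) auto
  finally show ?thesis .
qed

lemma exp_mean_abs_le_sum_exp:
  fixes w :: "nat \<Rightarrow> real"
  assumes "0 < K" "0 \<le> a"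
  shows "exp (a / real K * (\<Sum>i<K. \<bar>w i\<bar>)) \<le> (\<Sum>i<K. exp (a * w i) + exp (- a * w i))"
proof -
  have "exp (a / real K * (\<Sum>i<K. \<bar>w i\<bar>)) = exp (\<Sum>i<K. a / real K * \<bar>w i\<bar>)"
    by (simp add: sum_distrib_left)
  also have "\<dots> \<le> (\<Sum>i<K. exp (a * \<bar>w i\<bar>))"
    using exp_sum_le_sum_exp_mult[OF assms(1), of "\<lambda>i. a / real K * \<bar>w i\<bar>"] assms(1) by simp
  also have "\<dots> \<le> (\<Sum>i<K. exp (a * w i) + exp (- a * w i))"
    by (intro sum_mono) (simp add: abs_if add_increasing2 add_increasing)
  finally show ?thesis .
qed

lemma nn_integral_exp_mult_less:
  fixes M :: "'a measure" and p W :: "'a \<Rightarrow> real"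
  assumes [measurable]: "p \<in> borel_measurable M" "W \<in> borel_measurable M"
    and W_nonneg: "\<And>z. 0 \<le> W z" and less: "(\<integral>\<^sup>+z. ennreal (p z) \<partial>M) < T"
    and r0: "0 < r0" and fin: "(\<integral>\<^sup>+z. ennreal (p z * exp (r0 * W z)) \<partial>M) < \<infinity>"
  obtains r where "0 < r" "(\<integral>\<^sup>+z. ennreal (p z * exp (r * W z)) \<partial>M) < T"
proof -
  define r where "r k = r0 / real (Suc k)" for k
  define f where "f k z = ennreal (p z * exp (r k * W z))" for k z
  have r_pos: "0 < r k" for k
    using r0 by (simp add: r_def)
  have "r (Suc k) \<le> r k" for k
    using r0 unfolding r_def by (intro divide_left_mono) auto
  then have f_dec: "f (Suc k) z \<le> f k z" for k z
  proof (cases "0 \<le> p z")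
    case True
    then show ?thesis
      using \<open>r (Suc k) \<le> r k\<close> W_nonneg[of z] unfolding f_def
      by (intro ennreal_leI mult_left_mono) (auto intro: mult_right_mono)
  next
    case False
    then have "p z * exp (r (Suc k) * W z) \<le> 0"
      by (simp add: mult_nonpos_nonneg)
    then show ?thesis by (simp add: f_def ennreal_neg)
  qed
  then have dec: "decseq f"
    by (intro decseq_SucI le_funI)
  have "r \<longlonglongrightarrow> 0"
    unfolding r_def by (rule LIMSEQ_Suc[OF lim_const_over_n])
  then have "(\<lambda>k. f k z) \<longlonglongrightarrow> ennreal (p z * exp (0 * W z))" for z
    unfolding f_def by (intro tendsto_ennrealI tendsto_intros)
  moreover have "(\<lambda>k. f k z) \<longlonglongrightarrow> (INF k. f k z)" for z
    by (intro LIMSEQ_INF decseq_SucI f_dec)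
  ultimately have INF_f: "(INF k. f k z) = ennreal (p z)" for z
    using LIMSEQ_unique by fastforce
  have "(\<integral>\<^sup>+z. f 0 z \<partial>M) < \<infinity>"
    using fin by (simp add: f_def r_def)
  then have "(INF k. integral\<^sup>N M (f k)) = (\<integral>\<^sup>+z. (INF k. f k z) \<partial>M)"
    by (intro nn_integral_monotone_convergence_INF_decseq[symmetric, OF dec]) (simp_all add: f_def[abs_def])
  also have "\<dots> < T"
    using less by (simp add: INF_f)
  finally obtain k where "integral\<^sup>N M (f k) < T"
    by (auto simp: INF_less_iff)
  then show ?thesis
    using r_pos that unfolding f_def by blast
qed

lemma nn_integral_PiM_prod_power:
  fixes P :: "'a measure" and g :: "'a \<Rightarrow> ennreal"
  assumes "sigma_finite_measure P" "g \<in> borel_measurable P"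
  shows "(\<integral>\<^sup>+zs. (\<Prod>k<n. g (zs k)) \<partial>PiM {..<n} (\<lambda>_. P)) = (\<integral>\<^sup>+z. g z \<partial>P) ^ n"
proof -
  interpret product_sigma_finite "\<lambda>_::nat. P"
    using assms(1) by (simp add: product_sigma_finite_def)
  show ?thesis
    using product_nn_integral_prod[of "{..<n}" "\<lambda>_. g"] assms(2) by simp
qed

lemma chernoff_union_bound:
  fixes P :: "'a measure" and T :: "'b set" and Y :: "'b \<Rightarrow> 'a \<Rightarrow> real" and a :: "'b \<Rightarrow> real"
  assumes P: "sigma_finite_measure P" and T: "finite T"
    and Y_measurable: "\<And>y. y \<in> T \<Longrightarrow> Y y \<in> borel_measurable P"
    and cover: "\<And>zs. zs \<in> E \<Longrightarrow> zs \<in> space (PiM {..<n} (\<lambda>_. P)) \<Longrightarrow> \<exists>y\<in>T. a y \<le> (\<Sum>k<n. Y y (zs k))"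
  shows "emeasure (PiM {..<n} (\<lambda>_. P)) E
      \<le> (\<Sum>y\<in>T. ennreal (exp (- a y)) * (\<integral>\<^sup>+z. ennreal (exp (Y y z)) \<partial>P) ^ n)"
proof (cases "E \<in> sets (PiM {..<n} (\<lambda>_. P))")
  case False
  then show ?thesis by (simp add: emeasure_notin_sets)
next
  case True
  define G where "G y zs = ennreal (exp (- a y)) * (\<Prod>k<n. ennreal (exp (Y y (zs k))))" for y zs
  have G_measurable: "G y \<in> borel_measurable (PiM {..<n} (\<lambda>_. P))" if "y \<in> T" for y
    using Y_measurable[OF that] unfolding G_def by measurable
  have "indicator E zs \<le> (\<Sum>y\<in>T. G y zs)" if zs: "zs \<in> space (PiM {..<n} (\<lambda>_. P))" for zs
  proof (cases "zs \<in> E")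
    case True
    then obtain y where y: "y \<in> T" "a y \<le> (\<Sum>k<n. Y y (zs k))"
      using cover zs by blast
    have "G y zs = ennreal (exp (- a y) * exp (\<Sum>k<n. Y y (zs k)))"
      by (simp add: G_def prod_ennreal exp_sum ennreal_mult prod_nonneg)
    moreover have "1 \<le> exp (- a y) * exp (\<Sum>k<n. Y y (zs k))"
      using y(2) by (simp add: mult_exp_exp)
    ultimately have "1 \<le> G y zs"
      by (simp add: ennreal_leI flip: ennreal_1)
    also have "G y zs \<le> (\<Sum>y\<in>T. G y zs)"
      using y(1) T by (intro member_le_sum) auto
    finally show ?thesis using True by simp
  qed simp
  then have "(\<integral>\<^sup>+zs. indicator E zs \<partial>PiM {..<n} (\<lambda>_. P)) \<le> (\<integral>\<^sup>+zs. (\<Sum>y\<in>T. G y zs) \<partial>PiM {..<n} (\<lambda>_. P))"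
    by (intro nn_integral_mono)
  also have "\<dots> = (\<Sum>y\<in>T. \<integral>\<^sup>+zs. G y zs \<partial>PiM {..<n} (\<lambda>_. P))"
    using G_measurable by (intro nn_integral_sum) auto
  also have "\<dots> = (\<Sum>y\<in>T. ennreal (exp (- a y)) * (\<integral>\<^sup>+z. ennreal (exp (Y y z)) \<partial>P) ^ n)"
  proof (intro sum.cong refl)
    fix y assume y: "y \<in> T"
    have "(\<lambda>z. ennreal (exp (Y y z))) \<in> borel_measurable P"
      using Y_measurable[OF y] by measurable
    then have "(\<integral>\<^sup>+zs. (\<Prod>k<n. ennreal (exp (Y y (zs k)))) \<partial>PiM {..<n} (\<lambda>_. P))
        = (\<integral>\<^sup>+z. ennreal (exp (Y y z)) \<partial>P) ^ n"
      by (rule nn_integral_PiM_prod_power[OF P])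
    moreover have "(\<lambda>zs. \<Prod>k<n. ennreal (exp (Y y (zs k)))) \<in> borel_measurable (PiM {..<n} (\<lambda>_. P))"
      using Y_measurable[OF y] by measurable
    ultimately show "(\<integral>\<^sup>+zs. G y zs \<partial>PiM {..<n} (\<lambda>_. P))
        = ennreal (exp (- a y)) * (\<integral>\<^sup>+z. ennreal (exp (Y y z)) \<partial>P) ^ n"
      by (simp add: G_def nn_integral_cmult)
  qed
  finally show ?thesis
    using True by simp
qed

section \<open>Order estimation and exponential rates\<close>

lemma is_Khat_less_imp_near_maximizer:
  assumes Khat: "is_Khat \<Theta> p pen n zs K" and "K < K'" and \<theta>0: "\<theta>0 \<in> \<Theta> K'"
    and bound: "\<And>\<theta>. \<theta> \<in> \<Theta> K \<Longrightarrow> (\<Sum>i<n. ln (p \<theta> (zs i))) \<le> U" and pen: "0 \<le> pen n K"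
  obtains \<theta>' where "\<theta>' \<in> \<Theta> K"
    "\<And>\<theta>. \<theta> \<in> \<Theta> K' \<Longrightarrow> (\<Sum>i<n. ln (p \<theta> (zs i))) \<le> (\<Sum>i<n. ln (p \<theta>' (zs i))) + pen n K' + 1"
proof -
  define L where "L \<theta> = (\<Sum>i<n. ln (p \<theta> (zs i)))" for \<theta>
  define SU where "SU = (SUP \<theta>\<in>\<Theta> K. ereal (L \<theta>))"
  have crit_le: "crit \<Theta> p pen n zs K' \<le> SU - ereal (pen n K)"
    using Khat \<open>K < K'\<close> unfolding is_Khat_def crit_def SU_def L_def by auto
  have lower: "ereal (L \<theta>) - ereal (pen n K') \<le> crit \<Theta> p pen n zs K'" if "\<theta> \<in> \<Theta> K'" for \<theta>
    unfolding crit_def L_def using that by (intro ereal_minus_mono SUP_upper) auto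
  have "SU \<le> ereal U"
    unfolding SU_def using bound by (auto intro: SUP_least simp: L_def)
  moreover have "SU \<noteq> -\<infinity>"
    using lower[OF \<theta>0] crit_le by auto
  ultimately obtain \<sigma> where \<sigma>: "SU = ereal \<sigma>"
    by (cases SU) auto
  then obtain \<theta>' where \<theta>': "\<theta>' \<in> \<Theta> K" "\<sigma> - 1 < L \<theta>'"
    using less_SUP_iff[of "ereal (\<sigma> - 1)" "\<lambda>\<theta>. ereal (L \<theta>)" "\<Theta> K"] unfolding SU_def by auto
  show ?thesis
  proof (rule that[OF \<theta>'(1)])
    fix \<theta> assume "\<theta> \<in> \<Theta> K'"
    then have "ereal (L \<theta>) - ereal (pen n K') \<le> ereal \<sigma> - ereal (pen n K)"
      using lower crit_le \<sigma> by (metis order_trans)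
    then have "L \<theta> - pen n K' \<le> \<sigma> - pen n K"
      by simp
    then show "(\<Sum>i<n. ln (p \<theta> (zs i))) \<le> (\<Sum>i<n. ln (p \<theta>' (zs i))) + pen n K' + 1"
      using \<theta>'(2) pen unfolding L_def by linarith
  qed
qed

lemma limsup_eln_le_if_eventually_le_exp:
  fixes m :: "nat \<Rightarrow> real"
  assumes nonneg: "\<And>n. 0 \<le> m n" and le: "eventually (\<lambda>n. m n \<le> exp (- real n * R)) sequentially"
  shows "limsup (\<lambda>n. eln (m n) * ereal (1 / real n)) \<le> ereal (- R)"
proof (rule Limsup_bounded)
  show "eventually (\<lambda>n. eln (m n) * ereal (1 / real n) \<le> ereal (- R)) sequentially"
    using le eventually_gt_at_top[of 0]
  proof eventually_elim
    case (elim n)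
    show ?case
    proof (cases "m n = 0")
      case False
      then have "ln (m n) \<le> ln (exp (- real n * R))"
        using elim(1) nonneg[of n] by (subst ln_le_cancel_iff) auto
      then have "ln (m n) \<le> - real n * R"
        by simp
      then have "ln (m n) * (1 / real n) \<le> - R"
        using elim(2) by (simp add: field_simps)
      then show ?thesis
        using False by (simp add: eln_def)
    qed (use elim(2) in \<open>simp add: eln_def\<close>)
  qed
qed

lemma ereal_le_uminus_if_dense:
  fixes L H :: ereal
  assumes "\<And>R. ereal R < H \<Longrightarrow> L \<le> ereal (- R)"
  shows "L \<le> - H"
proof -
  have "H \<le> - L"
  proof (rule dense_le)
    fix x assume "x < H"
    then show "x \<le> - L"
      using assms by (cases x) (auto, metis ereal_minus_le_minus ereal_uminus_uminus uminus_ereal.simps(1))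
  qed
  then show ?thesis
    by (metis ereal_minus_le_minus ereal_uminus_uminus)
qed

lemma eventually_sum_exp_le_1:
  fixes b :: "nat \<Rightarrow> real" and s :: "'b \<Rightarrow> real"
  assumes "finite T" "\<And>y. y \<in> T \<Longrightarrow> 0 < s y" "(\<lambda>n. b n / real n) \<longlonglongrightarrow> 0" "0 < \<gamma>"
  shows "eventually (\<lambda>n. (\<Sum>y\<in>T. exp (b n / s y - real n * \<gamma>)) \<le> 1) sequentially"
proof -
  define c where "c = ln (real (card T))"
  have "eventually (\<lambda>n. b n / s y - real n * \<gamma> \<le> - c) sequentially" if "y \<in> T" for y
  proof -
    have sy: "s y \<noteq> 0"
      using assms(2)[OF that] by simp
    have "(\<lambda>n. (b n / real n) / s y + c / real n) \<longlonglongrightarrow> 0 / s y + 0"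
      by (intro tendsto_intros assms(3) lim_const_over_n sy)
    then have "eventually (\<lambda>n. (b n / real n) / s y + c / real n < \<gamma>) sequentially"
      using assms(4) by (intro order_tendstoD) auto
    then show ?thesis
      using eventually_gt_at_top[of 0]
      by eventually_elim (use assms(2)[OF that] in \<open>auto simp: field_simps\<close>)
  qed
  then have "eventually (\<lambda>n. \<forall>y\<in>T. b n / s y - real n * \<gamma> \<le> - c) sequentially"
    using assms(1) by (simp add: eventually_ball_finite)
  then show ?thesis
  proof eventually_elim
    case (elim n)
    show ?case
    proof (cases "T = {}")
      case False
      then have "0 < card T" using assms(1) by (simp add: card_gt_0_iff)
      have "(\<Sum>y\<in>T. exp (b n / s y - real n * \<gamma>)) \<le> (\<Sum>y\<in>T. exp (- c))"
        using elim by (intro sum_mono) simp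
      also have "\<dots> = 1"
        using \<open>0 < card T\<close> by (simp add: c_def exp_minus)
      finally show ?thesis .
    qed simp
  qed
qed

section \<open>Exponential families\<close>

locale exponential_family =
  fixes mu :: "'a measure" and hb :: "'a \<Rightarrow> real" and t :: "'a \<Rightarrow> nat \<Rightarrow> real" and d :: nat
    and phi :: "(nat \<Rightarrow> real) \<Rightarrow> real" and \<Theta> :: "(nat \<Rightarrow> real) set"
    and p :: "(nat \<Rightarrow> real) \<Rightarrow> 'a \<Rightarrow> real"
  assumes hb_measurable: "hb \<in> borel_measurable mu"
    and t_measurable: "\<And>i. i < d \<Longrightarrow> (\<lambda>z. t z i) \<in> borel_measurable mu"
    and \<Theta>_Rd: "\<And>\<theta>. \<theta> \<in> \<Theta> \<Longrightarrow> in_Rd d \<theta>"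
    and \<Theta>_convex: "fconvex \<Theta>"
    and \<Theta>_interior: "\<Theta> \<subseteq> rinterior d
      {\<theta>. in_Rd d \<theta> \<and> (\<integral>\<^sup>+z. ennreal (hb z * exp (\<Sum>i<d. \<theta> i * t z i)) \<partial>mu) < \<infinity>}"
    and p_eq: "\<And>\<theta> z. \<theta> \<in> \<Theta> \<Longrightarrow> z \<in> space mu \<Longrightarrow> p \<theta> z = hb z * exp ((\<Sum>i<d. \<theta> i * t z i) - phi \<theta>)"
    and p_pos: "\<And>\<theta> z. \<theta> \<in> \<Theta> \<Longrightarrow> z \<in> space mu \<Longrightarrow> 0 < p \<theta> z"
    and p_integral: "\<And>\<theta>. \<theta> \<in> \<Theta> \<Longrightarrow> (\<integral>\<^sup>+z. ennreal (p \<theta> z) \<partial>mu) = 1"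
begin

definition jensen_gap :: "real \<Rightarrow> (nat \<Rightarrow> real) \<Rightarrow> (nat \<Rightarrow> real) \<Rightarrow> real" where
  "jensen_gap s x y = s * phi x + (1 - s) * phi y - phi (mix s x y)"

definition t_dist :: "'a \<Rightarrow> 'a \<Rightarrow> real" where
  "t_dist z0 z = (\<Sum>i<d. \<bar>t z i - t z0 i\<bar>)"

lemma linear_t_measurable[measurable]: "(\<lambda>z. \<Sum>i<d. v i * t z i) \<in> borel_measurable mu"
  using t_measurable by (intro borel_measurable_sum borel_measurable_times) auto

lemma t_dist_measurable[measurable]: "t_dist z0 \<in> borel_measurable mu"
  unfolding t_dist_def[abs_def] using t_measurable
  by (intro borel_measurable_sum borel_measurable_abs borel_measurable_diff) auto

lemma t_dist_nonneg: "0 \<le> t_dist z0 z"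
  unfolding t_dist_def by (simp add: sum_nonneg)

lemma p_measurable[measurable]:
  assumes "\<theta> \<in> \<Theta>"
  shows "p \<theta> \<in> borel_measurable mu"
proof -
  have "(\<lambda>z. hb z * exp ((\<Sum>i<d. \<theta> i * t z i) - phi \<theta>)) \<in> borel_measurable mu"
    using hb_measurable by measurable
  then show ?thesis
    using assms by (subst measurable_cong[OF p_eq])
qed

lemma ln_p_eq:
  assumes "\<theta> \<in> \<Theta>" "z \<in> space mu"
  shows "ln (p \<theta> z) = ln (hb z) + (\<Sum>i<d. \<theta> i * t z i) - phi \<theta>"
proof -
  have "0 < hb z"
    using p_pos[OF assms] p_eq[OF assms] by (simp add: zero_less_mult_iff)
  then show ?thesis
    using p_eq[OF assms] by (simp add: ln_mult)
qed

lemma mix_in: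
  "x \<in> \<Theta> \<Longrightarrow> y \<in> \<Theta> \<Longrightarrow> 0 \<le> s \<Longrightarrow> s \<le> 1 \<Longrightarrow> mix s x y \<in> \<Theta>"
  using \<Theta>_convex by (rule fconvex_mix)

lemma ln_p_mix:
  assumes "x \<in> \<Theta>" "y \<in> \<Theta>" "0 \<le> s" "s \<le> 1" "z \<in> space mu"
  shows "ln (p (mix s x y) z) = s * ln (p x z) + (1 - s) * ln (p y z) + jensen_gap s x y"
proof -
  have "(\<Sum>i<d. mix s x y i * t z i) = s * (\<Sum>i<d. x i * t z i) + (1 - s) * (\<Sum>i<d. y i * t z i)"
    by (simp add: mix_def distrib_right sum.distrib sum_distrib_left mult.assoc)
  then show ?thesis
    using assms by (simp add: ln_p_eq mix_in jensen_gap_def algebra_simps)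
qed

lemma nn_integral_tilted_density:
  assumes "x \<in> \<Theta>" "y \<in> \<Theta>" "0 \<le> s" "s \<le> 1"
  shows "(\<integral>\<^sup>+z. ennreal (p y z * exp (- s * (ln (p y z) - ln (p x z)))) \<partial>mu)
    = ennreal (exp (- jensen_gap s x y))"
proof -
  have "(\<integral>\<^sup>+z. ennreal (p y z * exp (- s * (ln (p y z) - ln (p x z)))) \<partial>mu)
      = (\<integral>\<^sup>+z. ennreal (exp (- jensen_gap s x y)) * ennreal (p (mix s x y) z) \<partial>mu)"
  proof (intro nn_integral_cong)
    fix z assume z: "z \<in> space mu"
    have "p y z * exp (- s * (ln (p y z) - ln (p x z)))
        = exp (ln (p y z)) * exp (- s * (ln (p y z) - ln (p x z)))"
      using p_pos[OF assms(2) z] by simp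
    also have "\<dots> = exp (s * ln (p x z) + (1 - s) * ln (p y z))"
      by (simp add: mult_exp_exp algebra_simps)
    also have "\<dots> = exp (- jensen_gap s x y) * exp (ln (p (mix s x y) z))"
      unfolding ln_p_mix[OF assms z] by (simp add: mult_exp_exp)
    also have "\<dots> = exp (- jensen_gap s x y) * p (mix s x y) z"
      using p_pos[OF mix_in[OF assms] z] by simp
    finally show "ennreal (p y z * exp (- s * (ln (p y z) - ln (p x z))))
        = ennreal (exp (- jensen_gap s x y)) * ennreal (p (mix s x y) z)"
      using p_pos[OF mix_in[OF assms] z] by (simp add: ennreal_mult)
  qed
  also have "\<dots> = ennreal (exp (- jensen_gap s x y))"
    using mix_in[OF assms] by (simp add: nn_integral_cmult p_integral)
  finally show ?thesis .
qed

(* Comparing with a reference point z0 removes the log-partition function, whose continuity is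
   not assumed. *)
lemma ln_p_diff_le:
  assumes "x \<in> \<Theta>" "y \<in> \<Theta>" "z \<in> space mu" "z0 \<in> space mu"
  shows "ln (p x z) - ln (p y z) \<le> \<bar>ln (p x z0) - ln (p y z0)\<bar> + fdist y x * t_dist z0 z"
proof -
  have "ln (p x z) - ln (p y z) = ln (p x z0) - ln (p y z0) + (\<Sum>i<d. (x i - y i) * (t z i - t z0 i))"
    using assms by (simp add: ln_p_eq algebra_simps sum_subtractf sum.distrib)
  also have "(\<Sum>i<d. (x i - y i) * (t z i - t z0 i)) \<le> (\<Sum>i<d. fdist y x * \<bar>t z i - t z0 i\<bar>)"
  proof (intro sum_mono)
    fix i
    have "\<bar>x i - y i\<bar> \<le> fdist y x"
      using abs_diff_le_fdist[OF \<Theta>_Rd[OF assms(2)] \<Theta>_Rd[OF assms(1)]] by (simp add: abs_minus_commute)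
    have "(x i - y i) * (t z i - t z0 i) \<le> \<bar>x i - y i\<bar> * \<bar>t z i - t z0 i\<bar>"
      by (simp add: abs_mult[symmetric])
    also have "\<dots> \<le> fdist y x * \<bar>t z i - t z0 i\<bar>"
      using \<open>\<bar>x i - y i\<bar> \<le> fdist y x\<close> by (rule mult_right_mono) simp
    finally show "(x i - y i) * (t z i - t z0 i) \<le> fdist y x * \<bar>t z i - t z0 i\<bar>" .
  qed
  finally show ?thesis
    by (simp add: t_dist_def sum_distrib_left)
qed

lemma nn_integral_exp_t_finite:
  assumes y: "y \<in> \<Theta>"
  obtains a where "0 < a"
    "\<And>i \<sigma>. i < d \<Longrightarrow> \<bar>\<sigma>\<bar> = a \<Longrightarrow> (\<integral>\<^sup>+z. ennreal (p y z * exp (\<sigma> * t z i)) \<partial>mu) < \<infinity>"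
proof -
  obtain e where e: "0 < e" "\<And>v. in_Rd d v \<Longrightarrow> fdist y v < e \<Longrightarrow>
      (\<integral>\<^sup>+z. ennreal (hb z * exp (\<Sum>j<d. v j * t z j)) \<partial>mu) < \<infinity>"
    using \<Theta>_interior y unfolding rinterior_def by blast
  show ?thesis
  proof (rule that[of "e / 2"])
    fix i \<sigma> assume i: "i < d" and \<sigma>: "\<bar>\<sigma>\<bar> = e / 2"
    define v where "v j = y j + (if j = i then \<sigma> else 0)" for j
    have v: "in_Rd d v"
      using \<Theta>_Rd[OF y] i unfolding in_Rd_def v_def by auto
    have "(\<Sum>j<d. (y j - v j)\<^sup>2) = (\<Sum>j<d. if j = i then \<sigma>\<^sup>2 else 0)"
      by (intro sum.cong) (auto simp: v_def)
    then have "fdist y v = \<bar>\<sigma>\<bar>"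
      using i by (simp add: fdist_eq_sum[OF \<Theta>_Rd[OF y] v])
    then have fin: "(\<integral>\<^sup>+z. ennreal (hb z * exp (\<Sum>j<d. v j * t z j)) \<partial>mu) < \<infinity>"
      using e \<sigma> v by simp
    have "(\<Sum>j<d. v j * t z j) = (\<Sum>j<d. y j * t z j) + \<sigma> * t z i" for z
      using i by (simp add: v_def distrib_right sum.distrib if_distrib[of "\<lambda>x. x * _"] cong: if_cong)
    then have "(\<integral>\<^sup>+z. ennreal (p y z * exp (\<sigma> * t z i)) \<partial>mu)
        = (\<integral>\<^sup>+z. ennreal (exp (- phi y)) * ennreal (hb z * exp (\<Sum>j<d. v j * t z j)) \<partial>mu)"
      using y by (intro nn_integral_cong) (simp add: p_eq ennreal_mult'[symmetric] mult_exp_exp algebra_simps)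
    also have "\<dots> < \<infinity>"
      using fin hb_measurable by (simp add: nn_integral_cmult ennreal_mult_less_top)
    finally show "(\<integral>\<^sup>+z. ennreal (p y z * exp (\<sigma> * t z i)) \<partial>mu) < \<infinity>" .
  qed (use e in simp)
qed

lemma exp_t_dist_le:
  assumes "0 < d" "0 \<le> a"
  shows "exp (a / real d * t_dist z0 z)
    \<le> exp (a / real d * (\<Sum>i<d. \<bar>t z0 i\<bar>)) * (\<Sum>i<d. exp (a * t z i) + exp (- a * t z i))"
proof -
  have "t_dist z0 z \<le> (\<Sum>i<d. \<bar>t z i\<bar>) + (\<Sum>i<d. \<bar>t z0 i\<bar>)"
    unfolding t_dist_def sum.distrib[symmetric] by (intro sum_mono abs_triangle_ineq4)
  then have "a / real d * t_dist z0 z \<le> a / real d * (\<Sum>i<d. \<bar>t z i\<bar>) + a / real d * (\<Sum>i<d. \<bar>t z0 i\<bar>)"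
    using mult_left_mono[of _ _ "a / real d"] assms unfolding distrib_left[symmetric] by simp
  then have "exp (a / real d * t_dist z0 z)
      \<le> exp (a / real d * (\<Sum>i<d. \<bar>t z0 i\<bar>)) * exp (a / real d * (\<Sum>i<d. \<bar>t z i\<bar>))"
    by (simp add: mult_exp_exp)
  also have "\<dots> \<le> exp (a / real d * (\<Sum>i<d. \<bar>t z0 i\<bar>)) * (\<Sum>i<d. exp (a * t z i) + exp (- a * t z i))"
    using assms by (intro mult_left_mono exp_mean_abs_le_sum_exp) auto
  finally show ?thesis .
qed

lemma nn_integral_exp_t_dist_finite:
  assumes y: "y \<in> \<Theta>" and d: "0 < d"
  obtains r where "0 < r" "(\<integral>\<^sup>+z. ennreal (p y z * exp (r * t_dist z0 z)) \<partial>mu) < \<infinity>"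
proof -
  obtain a where a: "0 < a"
    "\<And>i \<sigma>. i < d \<Longrightarrow> \<bar>\<sigma>\<bar> = a \<Longrightarrow> (\<integral>\<^sup>+z. ennreal (p y z * exp (\<sigma> * t z i)) \<partial>mu) < \<infinity>"
    using nn_integral_exp_t_finite[OF y] by blast
  define C where "C = exp (a / real d * (\<Sum>i<d. \<bar>t z0 i\<bar>))"
  define E where "E \<sigma> i z = ennreal (p y z * exp (\<sigma> * t z i))" for \<sigma> i z
  have E_measurable: "E \<sigma> i \<in> borel_measurable mu" if "i < d" for \<sigma> i
    using t_measurable[OF that] p_measurable[OF y] unfolding E_def by measurable
  have "ennreal (p y z * exp (a / real d * t_dist z0 z)) \<le> ennreal C * (\<Sum>i<d. E a i z + E (- a) i z)"
    if z: "z \<in> space mu" for z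
  proof -
    have p: "0 \<le> p y z" using p_pos[OF y z] by simp
    have "p y z * exp (a / real d * t_dist z0 z)
        \<le> p y z * (C * (\<Sum>i<d. exp (a * t z i) + exp (- a * t z i)))"
      using exp_t_dist_le[OF d, of a] a(1) p unfolding C_def by (intro mult_left_mono) auto
    also have "\<dots> = C * (\<Sum>i<d. p y z * exp (a * t z i) + p y z * exp (- a * t z i))"
      by (simp add: sum_distrib_left algebra_simps)
    finally have "ennreal (p y z * exp (a / real d * t_dist z0 z))
        \<le> ennreal (C * (\<Sum>i<d. p y z * exp (a * t z i) + p y z * exp (- a * t z i)))"
      by (rule ennreal_leI)
    also have "\<dots> = ennreal C * (\<Sum>i<d. E a i z + E (- a) i z)"
      using p by (simp add: E_def C_def ennreal_mult sum_nonneg ennreal_plus flip: sum_ennreal)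
    finally show ?thesis .
  qed
  then have "(\<integral>\<^sup>+z. ennreal (p y z * exp (a / real d * t_dist z0 z)) \<partial>mu)
      \<le> (\<integral>\<^sup>+z. ennreal C * (\<Sum>i<d. E a i z + E (- a) i z) \<partial>mu)"
    by (intro nn_integral_mono)
  also have "\<dots> = ennreal C * (\<Sum>i<d. \<integral>\<^sup>+z. E a i z + E (- a) i z \<partial>mu)"
    using E_measurable
    by (subst nn_integral_cmult) (auto intro!: arg_cong2[where f=times] nn_integral_sum borel_measurable_sum)
  also have "\<dots> = ennreal C * (\<Sum>i<d. integral\<^sup>N mu (E a i) + integral\<^sup>N mu (E (- a) i))"
    using E_measurable by (simp add: nn_integral_add)
  also have "\<dots> < \<infinity>"
  proof -
    have "integral\<^sup>N mu (E \<sigma> i) < \<infinity>" if "i < d" "\<bar>\<sigma>\<bar> = a" for i \<sigma>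
      using a(2)[OF that] by (simp add: E_def[abs_def])
    then show ?thesis
      using a(1) by (simp add: ennreal_mult_less_top)
  qed
  finally show ?thesis
    using a(1) d that[of "a / real d"] by simp
qed

lemma nn_integral_exp_t_dist_less:
  assumes y: "y \<in> \<Theta>" and d: "0 < d" and T: "1 < T"
  obtains \<rho> where "0 < \<rho>" "(\<integral>\<^sup>+z. ennreal (p y z * exp (\<rho> * t_dist z0 z)) \<partial>mu) < T"
proof -
  obtain r where "0 < r" "(\<integral>\<^sup>+z. ennreal (p y z * exp (r * t_dist z0 z)) \<partial>mu) < \<infinity>"
    using nn_integral_exp_t_dist_finite[OF y d] by blast
  then show ?thesis
    using nn_integral_exp_mult_less[of "p y" mu "t_dist z0" T r] that y T
    by (auto simp: t_dist_nonneg p_integral)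
qed

lemma sum_ln_ratio_ge_jensen_gap:
  assumes x: "x \<in> \<Theta>" and y: "y \<in> \<Theta>" and s: "0 < s" "s \<le> 1" and zs: "\<And>k. k < n \<Longrightarrow> zs k \<in> space mu"
    and le: "(\<Sum>k<n. ln (p (mix s x y) (zs k))) \<le> (\<Sum>k<n. ln (p y (zs k))) + b"
  shows "real n * (jensen_gap s x y / s) - b / s \<le> (\<Sum>k<n. ln (p y (zs k)) - ln (p x (zs k)))"
proof -
  have "(\<Sum>k<n. ln (p (mix s x y) (zs k)))
      = s * (\<Sum>k<n. ln (p x (zs k))) + (1 - s) * (\<Sum>k<n. ln (p y (zs k))) + real n * jensen_gap s x y"
    using ln_p_mix[OF x y] s zs by (simp add: sum.distrib sum_distrib_left)
  with le have "real n * jensen_gap s x y - b \<le> s * (\<Sum>k<n. ln (p y (zs k)) - ln (p x (zs k)))"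
    by (simp add: sum_subtractf algebra_simps)
  then show ?thesis
    using s by (simp add: field_simps)
qed

lemma integrable_p: "\<theta> \<in> \<Theta> \<Longrightarrow> integrable mu (p \<theta>)"
  using p_pos p_integral by (intro integrableI_nonneg) (auto intro!: AE_I2 less_imp_le)

lemma integral_p: "\<theta> \<in> \<Theta> \<Longrightarrow> integral\<^sup>L mu (p \<theta>) = 1"
  using p_pos p_integral by (subst integral_eq_nn_integral) (auto intro!: AE_I2 less_imp_le)

lemma integral_tilted_density:
  assumes "x \<in> \<Theta>" "y \<in> \<Theta>" "0 \<le> s" "s \<le> 1"
  shows "integrable mu (\<lambda>z. p y z * exp (- s * (ln (p y z) - ln (p x z))))"
    and "(\<integral>z. p y z * exp (- s * (ln (p y z) - ln (p x z))) \<partial>mu) = exp (- jensen_gap s x y)"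
proof -
  have m: "(\<lambda>z. p y z * exp (- s * (ln (p y z) - ln (p x z)))) \<in> borel_measurable mu"
    using assms(1,2) by measurable
  have nonneg: "AE z in mu. 0 \<le> p y z * exp (- s * (ln (p y z) - ln (p x z)))"
    using p_pos[OF assms(2)] by (auto intro!: AE_I2 less_imp_le)
  show "integrable mu (\<lambda>z. p y z * exp (- s * (ln (p y z) - ln (p x z))))"
    using nn_integral_tilted_density[OF assms] by (intro integrableI_nonneg[OF m nonneg]) simp
  show "(\<integral>z. p y z * exp (- s * (ln (p y z) - ln (p x z))) \<partial>mu) = exp (- jensen_gap s x y)"
    using nn_integral_tilted_density[OF assms] by (subst integral_eq_nn_integral[OF m nonneg]) simp
qed

lemma tendsto_integral_tilted_difference_quotient:
  assumes x: "x \<in> \<Theta>" and y: "y \<in> \<Theta>"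
    and int: "integrable mu (\<lambda>z. p y z * (ln (p y z) - ln (p x z)))"
  shows "((\<lambda>s. \<integral>z. p y z * ((1 - exp (- s * (ln (p y z) - ln (p x z)))) / s) \<partial>mu)
    \<longlongrightarrow> (\<integral>z. p y z * (ln (p y z) - ln (p x z)) \<partial>mu)) (at_right 0)"
proof (rule tendsto_integral_one_minus_exp_div[OF p_measurable[OF y] _ int])
  show "(\<lambda>z. ln (p y z) - ln (p x z)) \<in> borel_measurable mu"
    using x y by measurable
  show "integrable mu (\<lambda>z. p y z * exp (- (ln (p y z) - ln (p x z))))"
    using integral_tilted_density(1)[OF x y, of 1] by simp
qed

lemma eventually_jensen_gap_div_gt:
  assumes x: "x \<in> \<Theta>" and y: "y \<in> \<Theta>" and \<gamma>: "0 < \<gamma>"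
    and int: "integrable mu (\<lambda>z. p y z * (ln (p y z) - ln (p x z)))"
  shows "eventually (\<lambda>s. (\<integral>z. p y z * (ln (p y z) - ln (p x z)) \<partial>mu) - \<gamma> < jensen_gap s x y / s) (at_right 0)"
proof -
  have "eventually (\<lambda>s. (\<integral>z. p y z * (ln (p y z) - ln (p x z)) \<partial>mu) - \<gamma>
      < \<integral>z. p y z * ((1 - exp (- s * (ln (p y z) - ln (p x z)))) / s) \<partial>mu) (at_right 0)"
    using tendsto_integral_tilted_difference_quotient[OF x y int] \<gamma> by (intro order_tendstoD) auto
  moreover have "eventually (\<lambda>s. s \<in> {0<..<1}) (at_right (0::real))"
    by (rule eventually_at_rightI) auto
  ultimately show ?thesis
  proof eventually_elim
    case (elim s)
    then have s: "0 \<le> s" "s \<le> 1" "s \<noteq> 0" by auto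
    have "(\<integral>z. p y z * ((1 - exp (- s * (ln (p y z) - ln (p x z)))) / s) \<partial>mu)
        = ((\<integral>z. p y z \<partial>mu) - (\<integral>z. p y z * exp (- s * (ln (p y z) - ln (p x z))) \<partial>mu)) / s"
      using integrable_p[OF y] integral_tilted_density(1)[OF x y s(1,2)]
      by (simp add: right_diff_distrib diff_divide_distrib[symmetric])
    also have "\<dots> = (1 - exp (- jensen_gap s x y)) / s"
      using integral_p[OF y] integral_tilted_density(2)[OF x y s(1,2)] by simp
    also have "\<dots> \<le> jensen_gap s x y / s"
      using s exp_ge_add_one_self[of "- jensen_gap s x y"] by (intro divide_right_mono) auto
    finally show ?case
      using elim(1) by linarith
  qed
qed

lemma jensen_gap_fcontinuous:
  assumes cont: "fcontinuous_on \<Theta> (\<lambda>\<theta>. ln (p \<theta> z0))" and z0: "z0 \<in> space mu"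
    and x: "x \<in> \<Theta>" and s: "0 \<le> s" "s \<le> 1"
  shows "fcontinuous_on \<Theta> (jensen_gap s x)"
  unfolding fcontinuous_on_def
proof (intro ballI allI impI)
  fix y and e :: real assume y: "y \<in> \<Theta>" and e: "0 < e"
  obtain \<delta>1 where \<delta>1: "0 < \<delta>1" "\<And>\<theta>. \<theta> \<in> \<Theta> \<Longrightarrow> fdist y \<theta> < \<delta>1 \<Longrightarrow> \<bar>ln (p \<theta> z0) - ln (p y z0)\<bar> < e / 2"
    using cont y e unfolding fcontinuous_on_def by (metis half_gt_zero)
  obtain \<delta>2 where \<delta>2: "0 < \<delta>2" "\<And>\<theta>. \<theta> \<in> \<Theta> \<Longrightarrow> fdist (mix s x y) \<theta> < \<delta>2
      \<Longrightarrow> \<bar>ln (p \<theta> z0) - ln (p (mix s x y) z0)\<bar> < e / 2"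
    using cont mix_in[OF x y s] e unfolding fcontinuous_on_def by (metis half_gt_zero)
  show "\<exists>\<delta>>0. \<forall>\<theta>\<in>\<Theta>. fdist y \<theta> < \<delta> \<longrightarrow> \<bar>jensen_gap s x \<theta> - jensen_gap s x y\<bar> < e"
  proof (intro exI[of _ "min \<delta>1 \<delta>2"] conjI ballI impI)
    fix \<theta> assume \<theta>: "\<theta> \<in> \<Theta>" and d: "fdist y \<theta> < min \<delta>1 \<delta>2"
    have "fdist (mix s x y) (mix s x \<theta>) \<le> fdist y \<theta>"
      using \<Theta>_Rd x y \<theta> s by (intro fdist_mix_le) auto
    then have "\<bar>ln (p (mix s x \<theta>) z0) - ln (p (mix s x y) z0)\<bar> < e / 2"
      using d by (intro \<delta>2(2) mix_in[OF x \<theta> s]) auto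
    moreover have "\<bar>ln (p \<theta> z0) - ln (p y z0)\<bar> < e / 2"
      using \<delta>1(2)[OF \<theta>] d by simp
    moreover have "\<bar>(1 - s) * (ln (p \<theta> z0) - ln (p y z0))\<bar> \<le> \<bar>ln (p \<theta> z0) - ln (p y z0)\<bar>"
      using s by (simp add: abs_mult mult_left_le_one_le)
    moreover have "jensen_gap s x \<theta> - jensen_gap s x y
        = (ln (p (mix s x \<theta>) z0) - ln (p (mix s x y) z0)) - (1 - s) * (ln (p \<theta> z0) - ln (p y z0))"
      using ln_p_mix[OF x \<theta> s z0] ln_p_mix[OF x y s z0] by (simp add: algebra_simps)
    ultimately show "\<bar>jensen_gap s x \<theta> - jensen_gap s x y\<bar> < e"
      by linarith
  qed (use \<delta>1 \<delta>2 in simp)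
qed

end

section \<open>Underfitting in an exponential model\<close>

locale exp_family_order_selection =
  exponential_family mu hb t Kstar phi "\<Theta> Kstar" p
  for mu :: "'a measure" and hb t Kstar phi and \<Theta> :: "nat \<Rightarrow> (nat \<Rightarrow> real) set" and p +
  fixes pen :: "nat \<Rightarrow> nat \<Rightarrow> real" and u :: "'a \<Rightarrow> real" and \<theta>star :: "nat \<Rightarrow> real"
  assumes \<Theta>_nested: "\<And>K. \<Theta> K \<subseteq> \<Theta> (Suc K)"
    and Kstar_pos: "0 < Kstar"
    and \<theta>star_in: "\<theta>star \<in> \<Theta> Kstar"
    and lower_compact: "fcompact (\<Theta> (Kstar - 1))"
    and ln_p_continuous: "\<And>z. z \<in> space mu \<Longrightarrow> fcontinuous_on (\<Theta> Kstar) (\<lambda>\<theta>. ln (p \<theta> z))"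
    and ln_p_le: "\<And>\<theta> z. \<theta> \<in> \<Theta> Kstar \<Longrightarrow> z \<in> space mu \<Longrightarrow> ln (p \<theta> z) \<le> u z"
    and pen_nonneg: "\<And>n K. 0 < K \<Longrightarrow> 0 \<le> pen n K"
    and pen_sublinear: "(\<lambda>n. pen n Kstar / real n) \<longlonglongrightarrow> 0"
    and relent_finite: "\<And>\<theta>. \<theta> \<in> \<Theta> Kstar \<Longrightarrow> relent (density mu (p \<theta>)) (density mu (p \<theta>star)) < \<infinity>"
begin

abbreviation Pn :: "nat \<Rightarrow> (nat \<Rightarrow> 'a) measure" where
  "Pn n \<equiv> PiM {..<n} (\<lambda>_. density mu (p \<theta>star))"

definition underfit :: "nat \<Rightarrow> (nat \<Rightarrow> 'a) set" where
  "underfit n = {zs \<in> space (Pn n). \<exists>K<Kstar. is_Khat \<Theta> p pen n zs K}"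

definition kl :: "(nat \<Rightarrow> real) \<Rightarrow> real" where
  "kl \<theta> = (\<integral>z. p \<theta> z * (ln (p \<theta> z) - ln (p \<theta>star z)) \<partial>mu)"

lemma lower_subset: "\<Theta> K \<subseteq> \<Theta> Kstar" if "K < Kstar"
  using lift_Suc_mono_le[of \<Theta>, OF \<Theta>_nested] that by simp

lemma lower_in: "\<theta> \<in> \<Theta> (Kstar - 1) \<Longrightarrow> \<theta> \<in> \<Theta> Kstar"
  using lower_subset[of "Kstar - 1"] Kstar_pos by auto

lemma relent_eq_kl:
  assumes "\<theta> \<in> \<Theta> Kstar"
  shows "integrable mu (\<lambda>z. p \<theta> z * (ln (p \<theta> z) - ln (p \<theta>star z)))"
    and "relent (density mu (p \<theta>)) (density mu (p \<theta>star)) = ereal (kl \<theta>)"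
  using relent_density_eq_integral[OF p_measurable[OF assms] p_measurable[OF \<theta>star_in]
      p_pos[OF assms] p_pos[OF \<theta>star_in] p_integral[OF \<theta>star_in] relent_finite[OF assms]]
  by (simp_all add: kl_def)

lemma space_nonempty: "space mu \<noteq> {}"
  using p_integral[OF \<theta>star_in] by (auto simp: nn_integral_empty)

lemma space_Pn: "zs \<in> space (Pn n) \<Longrightarrow> k < n \<Longrightarrow> zs k \<in> space mu"
  by (auto simp: space_PiM PiE_iff)

lemma underfit_imp_near_maximizer:
  assumes "zs \<in> underfit n"
  obtains \<theta>' where "\<theta>' \<in> \<Theta> (Kstar - 1)"
    "\<And>\<theta>. \<theta> \<in> \<Theta> Kstar \<Longrightarrow> (\<Sum>k<n. ln (p \<theta> (zs k))) \<le> (\<Sum>k<n. ln (p \<theta>' (zs k))) + (pen n Kstar + 1)"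
proof -
  obtain K where K: "K < Kstar" "is_Khat \<Theta> p pen n zs K" and zs: "zs \<in> space (Pn n)"
    using assms by (auto simp: underfit_def)
  have "(\<Sum>k<n. ln (p \<theta> (zs k))) \<le> (\<Sum>k<n. u (zs k))" if "\<theta> \<in> \<Theta> K" for \<theta>
    using lower_subset[OF K(1)] that space_Pn[OF zs] by (intro sum_mono ln_p_le) auto
  moreover have "0 \<le> pen n K"
    using K(2) by (intro pen_nonneg) (simp add: is_Khat_def)
  ultimately obtain \<theta>' where \<theta>': "\<theta>' \<in> \<Theta> K"
    "\<And>\<theta>. \<theta> \<in> \<Theta> Kstar \<Longrightarrow> (\<Sum>k<n. ln (p \<theta> (zs k))) \<le> (\<Sum>k<n. ln (p \<theta>' (zs k))) + pen n Kstar + 1"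
    using is_Khat_less_imp_near_maximizer[OF K(2,1) \<theta>star_in] by metis
  moreover have "\<Theta> K \<subseteq> \<Theta> (Kstar - 1)"
    using lift_Suc_mono_le[of \<Theta>, OF \<Theta>_nested] K(1) by simp
  ultimately show ?thesis
    using that[of \<theta>'] by (auto simp: add.assoc)
qed

definition chernoff_certificate :: "real \<Rightarrow> 'a \<Rightarrow> (nat \<Rightarrow> real) \<Rightarrow> real \<Rightarrow> real \<Rightarrow> real \<Rightarrow> bool" where
  "chernoff_certificate \<gamma> z0 y r s \<rho> \<longleftrightarrow> 0 < s \<and> s \<le> 1 \<and>
     (\<integral>\<^sup>+z. ennreal (p y z * exp (\<rho> * t_dist z0 z)) \<partial>mu) < ennreal (exp \<gamma>) \<and>
     (\<forall>\<theta>\<in>\<Theta> Kstar. fdist y \<theta> < r \<longrightarrow> kl y - \<gamma> \<le> jensen_gap s \<theta>star \<theta> / s \<and>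
        (\<forall>z\<in>space mu. ln (p \<theta> z) - ln (p y z) \<le> \<rho> * t_dist z0 z + \<gamma>))"

lemma jensen_gap_div_locally_ge_kl:
  assumes y: "y \<in> \<Theta> Kstar" and \<gamma>: "0 < \<gamma>" and z0: "z0 \<in> space mu"
  obtains s \<delta> where "0 < s" "s \<le> 1" "0 < \<delta>"
    "\<And>\<theta>. \<theta> \<in> \<Theta> Kstar \<Longrightarrow> fdist y \<theta> < \<delta> \<Longrightarrow> kl y - \<gamma> \<le> jensen_gap s \<theta>star \<theta> / s"
proof -
  have "eventually (\<lambda>s. kl y - \<gamma> / 2 < jensen_gap s \<theta>star y / s \<and> s \<in> {0<..<1}) (at_right 0)"
    using eventually_jensen_gap_div_gt[OF \<theta>star_in y, of "\<gamma> / 2"] relent_eq_kl(1)[OF y] \<gamma>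
      eventually_at_rightI[of "0::real" 1 "\<lambda>s. s \<in> {0<..<1}"]
    by (auto simp: kl_def intro: eventually_conj)
  then obtain s where s: "kl y - \<gamma> / 2 < jensen_gap s \<theta>star y / s" "0 < s" "s \<le> 1"
    using eventually_happens'[OF trivial_limit_at_right_real] by fastforce
  have "0 < s * \<gamma> / 2"
    using s(2) \<gamma> by simp
  then obtain \<delta> where \<delta>: "0 < \<delta>"
    "\<And>\<theta>. \<theta> \<in> \<Theta> Kstar \<Longrightarrow> fdist y \<theta> < \<delta> \<Longrightarrow> \<bar>jensen_gap s \<theta>star \<theta> - jensen_gap s \<theta>star y\<bar> < s * \<gamma> / 2"
    using jensen_gap_fcontinuous[OF ln_p_continuous[OF z0] z0 \<theta>star_in] s y unfolding fcontinuous_on_def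
    by (metis less_imp_le)
  show ?thesis
  proof (rule that[OF s(2,3) \<delta>(1)])
    fix \<theta> assume "\<theta> \<in> \<Theta> Kstar" "fdist y \<theta> < \<delta>"
    then have "\<bar>jensen_gap s \<theta>star \<theta> - jensen_gap s \<theta>star y\<bar> < s * \<gamma> / 2"
      by (rule \<delta>(2))
    then have "jensen_gap s \<theta>star y - jensen_gap s \<theta>star \<theta> < s * (\<gamma> / 2)"
      by arith
    then have "jensen_gap s \<theta>star y / s - jensen_gap s \<theta>star \<theta> / s < \<gamma> / 2"
      using s(2) by (simp add: diff_divide_distrib[symmetric] pos_divide_less_eq mult.commute)
    then show "kl y - \<gamma> \<le> jensen_gap s \<theta>star \<theta> / s"
      using s(1) by linarith
  qed
qed

lemma ln_p_ratio_locally_dominated: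
  assumes y: "y \<in> \<Theta> Kstar" and \<gamma>: "0 < \<gamma>" and z0: "z0 \<in> space mu" and \<rho>: "0 < \<rho>"
  obtains \<delta> where "0 < \<delta>" "\<And>\<theta> z. \<theta> \<in> \<Theta> Kstar \<Longrightarrow> fdist y \<theta> < \<delta> \<Longrightarrow> z \<in> space mu \<Longrightarrow>
      ln (p \<theta> z) - ln (p y z) \<le> \<rho> * t_dist z0 z + \<gamma>"
proof -
  obtain \<delta> where \<delta>: "0 < \<delta>"
    "\<And>\<theta>. \<theta> \<in> \<Theta> Kstar \<Longrightarrow> fdist y \<theta> < \<delta> \<Longrightarrow> \<bar>ln (p \<theta> z0) - ln (p y z0)\<bar> < \<gamma>"
    using ln_p_continuous[OF z0] y \<gamma> unfolding fcontinuous_on_def by metis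
  show ?thesis
  proof (rule that[of "min \<rho> \<delta>"])
    fix \<theta> z assume \<theta>: "\<theta> \<in> \<Theta> Kstar" and d: "fdist y \<theta> < min \<rho> \<delta>" and z: "z \<in> space mu"
    have "ln (p \<theta> z) - ln (p y z) \<le> \<bar>ln (p \<theta> z0) - ln (p y z0)\<bar> + fdist y \<theta> * t_dist z0 z"
      by (rule ln_p_diff_le[OF \<theta> y z z0])
    also have "\<dots> \<le> \<gamma> + \<rho> * t_dist z0 z"
      using \<delta>(2)[OF \<theta>] d by (intro add_mono mult_right_mono t_dist_nonneg) auto
    finally show "ln (p \<theta> z) - ln (p y z) \<le> \<rho> * t_dist z0 z + \<gamma>"
      by simp
  qed (use \<rho> \<delta> in simp)
qed

lemma chernoff_certificate_exists:
  assumes y: "y \<in> \<Theta> Kstar" and \<gamma>: "0 < \<gamma>" and z0: "z0 \<in> space mu"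
  shows "\<exists>r>0. \<exists>s \<rho>. chernoff_certificate \<gamma> z0 y r s \<rho>"
proof -
  obtain s \<delta>1 where s: "0 < s" "s \<le> 1" "0 < \<delta>1"
    "\<And>\<theta>. \<theta> \<in> \<Theta> Kstar \<Longrightarrow> fdist y \<theta> < \<delta>1 \<Longrightarrow> kl y - \<gamma> \<le> jensen_gap s \<theta>star \<theta> / s"
    using jensen_gap_div_locally_ge_kl[OF y \<gamma> z0] by blast
  obtain \<rho> where \<rho>: "0 < \<rho>" "(\<integral>\<^sup>+z. ennreal (p y z * exp (\<rho> * t_dist z0 z)) \<partial>mu) < ennreal (exp \<gamma>)"
    using nn_integral_exp_t_dist_less[OF y Kstar_pos, of "ennreal (exp \<gamma>)" z0] \<gamma> by auto
  obtain \<delta>2 where \<delta>2: "0 < \<delta>2" "\<And>\<theta> z. \<theta> \<in> \<Theta> Kstar \<Longrightarrow> fdist y \<theta> < \<delta>2 \<Longrightarrow> z \<in> space mu \<Longrightarrow>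
      ln (p \<theta> z) - ln (p y z) \<le> \<rho> * t_dist z0 z + \<gamma>"
    using ln_p_ratio_locally_dominated[OF y \<gamma> z0 \<rho>(1)] by blast
  have "chernoff_certificate \<gamma> z0 y (min \<delta>1 \<delta>2) s \<rho>"
    using s \<rho>(2) \<delta>2(2) by (auto simp: chernoff_certificate_def)
  then show ?thesis
    using s(3) \<delta>2(1) by (intro exI[of _ "min \<delta>1 \<delta>2"]) auto
qed

lemma certified_cover_exists:
  assumes \<gamma>: "0 < \<gamma>" and z0: "z0 \<in> space mu"
  obtains T r s \<rho> where "finite T" "T \<subseteq> \<Theta> (Kstar - 1)"
    "\<And>y. y \<in> T \<Longrightarrow> chernoff_certificate \<gamma> z0 y (r y) (s y) (\<rho> y)"
    "\<And>\<theta>. \<theta> \<in> \<Theta> (Kstar - 1) \<Longrightarrow> \<exists>y\<in>T. fdist y \<theta> < r y"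
proof -
  have cert_ex: "\<exists>r>0. \<exists>s \<rho>. chernoff_certificate \<gamma> z0 y r s \<rho>" if "y \<in> \<Theta> (Kstar - 1)" for y
    using chernoff_certificate_exists[OF lower_in[OF that] \<gamma> z0] .
  have Rd: "in_Rd Kstar \<theta>" if "\<theta> \<in> \<Theta> (Kstar - 1)" for \<theta>
    using \<Theta>_Rd[OF lower_in[OF that]] .
  obtain T r where T: "finite T" "T \<subseteq> \<Theta> (Kstar - 1)"
    and certified_ex: "\<And>y. y \<in> T \<Longrightarrow> 0 < r y \<and> (\<exists>s \<rho>. chernoff_certificate \<gamma> z0 y (r y) s \<rho>)"
    and covers: "\<And>\<theta>. \<theta> \<in> \<Theta> (Kstar - 1) \<Longrightarrow> \<exists>y\<in>T. fdist y \<theta> < r y"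
  proof (rule fcompact_finite_ball_cover[OF lower_compact Rd cert_ex])
    fix T r assume "finite T" "T \<subseteq> \<Theta> (Kstar - 1)"
      "\<And>y. y \<in> T \<Longrightarrow> 0 < r y \<and> (\<exists>s \<rho>. chernoff_certificate \<gamma> z0 y (r y) s \<rho>)"
      "\<And>\<theta>. \<theta> \<in> \<Theta> (Kstar - 1) \<Longrightarrow> \<exists>y\<in>T. fdist y \<theta> < r y"
    then show thesis by (rule that)
  qed
  have "\<forall>y\<in>T. \<exists>s. \<exists>\<rho>. chernoff_certificate \<gamma> z0 y (r y) s \<rho>"
    using certified_ex by blast
  from bchoice[OF this] obtain s where "\<forall>y\<in>T. \<exists>\<rho>. chernoff_certificate \<gamma> z0 y (r y) (s y) \<rho>"
    by blast
  from bchoice[OF this] obtain \<rho> where "\<And>y. y \<in> T \<Longrightarrow> chernoff_certificate \<gamma> z0 y (r y) (s y) (\<rho> y)"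
    by blast
  then show ?thesis
    using that T covers by blast
qed

context
  fixes \<gamma> R :: real and z0 :: 'a and T :: "(nat \<Rightarrow> real) set" and r s \<rho> :: "(nat \<Rightarrow> real) \<Rightarrow> real"
  assumes z0: "z0 \<in> space mu"
    and T: "finite T" "T \<subseteq> \<Theta> (Kstar - 1)"
    and certified: "\<And>y. y \<in> T \<Longrightarrow> chernoff_certificate \<gamma> z0 y (r y) (s y) (\<rho> y)"
    and covers: "\<And>\<theta>. \<theta> \<in> \<Theta> (Kstar - 1) \<Longrightarrow> \<exists>y\<in>T. fdist y \<theta> < r y"
    and kl_large: "\<And>y. y \<in> T \<Longrightarrow> R + 4 * \<gamma> \<le> kl y"
begin

lemma underfit_imp_exceeds:
  assumes zs: "zs \<in> underfit n"
  shows "\<exists>y\<in>T. real n * (R + 2 * \<gamma>) - (pen n Kstar + 1) / s y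
    \<le> (\<Sum>k<n. ln (p y (zs k)) - ln (p \<theta>star (zs k)) + \<rho> y * t_dist z0 (zs k))"
proof -
  obtain \<theta>' where \<theta>': "\<theta>' \<in> \<Theta> (Kstar - 1)"
    and near_max: "\<And>\<theta>. \<theta> \<in> \<Theta> Kstar \<Longrightarrow> (\<Sum>k<n. ln (p \<theta> (zs k))) \<le> (\<Sum>k<n. ln (p \<theta>' (zs k))) + (pen n Kstar + 1)"
    using underfit_imp_near_maximizer[OF zs] by blast
  obtain y where y: "y \<in> T" "fdist y \<theta>' < r y"
    using covers[OF \<theta>'] by blast
  have \<theta>'_in: "\<theta>' \<in> \<Theta> Kstar"
    using \<theta>' by (rule lower_in)
  have zs_space: "\<And>k. k < n \<Longrightarrow> zs k \<in> space mu"
    using zs by (auto simp: underfit_def space_Pn)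
  have s: "0 < s y" "s y \<le> 1"
    and gap: "kl y - \<gamma> \<le> jensen_gap (s y) \<theta>star \<theta>' / s y"
    and dominated: "\<And>z. z \<in> space mu \<Longrightarrow> ln (p \<theta>' z) - ln (p y z) \<le> \<rho> y * t_dist z0 z + \<gamma>"
    using certified[OF y(1)] \<theta>'_in y(2) unfolding chernoff_certificate_def by auto
  have "real n * (jensen_gap (s y) \<theta>star \<theta>' / s y) - (pen n Kstar + 1) / s y
      \<le> (\<Sum>k<n. ln (p \<theta>' (zs k)) - ln (p \<theta>star (zs k)))"
    using s zs_space near_max[OF mix_in[OF \<theta>star_in \<theta>'_in]] s
    by (intro sum_ln_ratio_ge_jensen_gap[OF \<theta>star_in \<theta>'_in]) auto
  moreover have "(\<Sum>k<n. ln (p \<theta>' (zs k)) - ln (p \<theta>star (zs k)))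
      \<le> (\<Sum>k<n. ln (p y (zs k)) - ln (p \<theta>star (zs k)) + \<rho> y * t_dist z0 (zs k)) + real n * \<gamma>"
  proof -
    have "(\<Sum>k<n. ln (p \<theta>' (zs k)) - ln (p \<theta>star (zs k)))
        \<le> (\<Sum>k<n. (ln (p y (zs k)) - ln (p \<theta>star (zs k)) + \<rho> y * t_dist z0 (zs k)) + \<gamma>)"
      using dominated zs_space by (intro sum_mono) fastforce
    then show ?thesis
      by (simp add: sum.distrib)
  qed
  moreover have "real n * (R + 3 * \<gamma>) \<le> real n * (jensen_gap (s y) \<theta>star \<theta>' / s y)"
    using gap kl_large[OF y(1)] by (intro mult_left_mono) auto
  ultimately show ?thesis
    using y(1) by (intro bexI[of _ y]) (auto simp: algebra_simps)
qed

lemma measure_underfit_le: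
  "measure (Pn n) (underfit n) \<le> (\<Sum>y\<in>T. exp ((pen n Kstar + 1) / s y - real n * (R + \<gamma>)))"
proof -
  define Y where "Y y z = ln (p y z) - ln (p \<theta>star z) + \<rho> y * t_dist z0 z" for y z
  define a where "a y = real n * (R + 2 * \<gamma>) - (pen n Kstar + 1) / s y" for y
  interpret Pstar: finite_measure "density mu (p \<theta>star)"
    using p_integral[OF \<theta>star_in] p_measurable[OF \<theta>star_in] by (intro finite_measureI) (simp add: emeasure_density)
  have T_in: "y \<in> \<Theta> Kstar" if "y \<in> T" for y
    using T(2) that lower_in by blast
  have Y_measurable: "Y y \<in> borel_measurable (density mu (p \<theta>star))" if "y \<in> T" for y
    using p_measurable[OF T_in[OF that]] p_measurable[OF \<theta>star_in] unfolding Y_def by simp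
  have moment: "(\<integral>\<^sup>+z. ennreal (exp (Y y z)) \<partial>density mu (p \<theta>star)) \<le> ennreal (exp \<gamma>)" if y: "y \<in> T" for y
  proof -
    have "(\<integral>\<^sup>+z. ennreal (exp (Y y z)) \<partial>density mu (p \<theta>star))
        = (\<integral>\<^sup>+z. ennreal (p y z * exp (\<rho> y * t_dist z0 z)) \<partial>mu)"
      unfolding Y_def using T_in[OF y] \<theta>star_in
      by (intro nn_integral_density_exp_ln_ratio p_measurable p_pos borel_measurable_times) auto
    then show ?thesis
      using certified[OF y] by (simp add: chernoff_certificate_def less_imp_le)
  qed
  have "emeasure (Pn n) (underfit n)
      \<le> (\<Sum>y\<in>T. ennreal (exp (- a y)) * (\<integral>\<^sup>+z. ennreal (exp (Y y z)) \<partial>density mu (p \<theta>star)) ^ n)"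
  proof (rule chernoff_union_bound[OF Pstar.sigma_finite_measure_axioms T(1) Y_measurable])
    show "\<exists>y\<in>T. a y \<le> (\<Sum>k<n. Y y (zs k))" if "zs \<in> underfit n" for zs
      using underfit_imp_exceeds[OF that] by (simp add: a_def Y_def)
  qed
  also have "\<dots> \<le> (\<Sum>y\<in>T. ennreal (exp (- a y)) * ennreal (exp \<gamma>) ^ n)"
    using moment by (intro sum_mono mult_left_mono power_mono) auto
  also have "\<dots> = (\<Sum>y\<in>T. ennreal (exp ((pen n Kstar + 1) / s y - real n * (R + \<gamma>))))"
  proof (intro sum.cong refl)
    fix y
    have "exp (- a y) * exp \<gamma> ^ n = exp ((pen n Kstar + 1) / s y - real n * (R + \<gamma>))"
      by (simp add: a_def mult_exp_exp algebra_simps flip: exp_of_nat_mult)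
    then show "ennreal (exp (- a y)) * ennreal (exp \<gamma>) ^ n
        = ennreal (exp ((pen n Kstar + 1) / s y - real n * (R + \<gamma>)))"
      by (simp add: ennreal_power ennreal_mult[symmetric])
  qed
  also have "\<dots> = ennreal (\<Sum>y\<in>T. exp ((pen n Kstar + 1) / s y - real n * (R + \<gamma>)))"
    by (rule sum_ennreal) simp
  finally show ?thesis
    unfolding measure_def by (intro enn2real_leI) (auto intro: sum_nonneg)
qed

end

lemma eventually_measure_underfit_le:
  assumes \<gamma>: "0 < \<gamma>" and kl_large: "\<And>\<theta>. \<theta> \<in> \<Theta> (Kstar - 1) \<Longrightarrow> R + 4 * \<gamma> \<le> kl \<theta>"
  shows "eventually (\<lambda>n. measure (Pn n) (underfit n) \<le> exp (- real n * R)) sequentially"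
proof -
  obtain z0 where z0: "z0 \<in> space mu"
    using space_nonempty by blast
  obtain T r s \<rho> where T: "finite T" "T \<subseteq> \<Theta> (Kstar - 1)"
    and certified: "\<And>y. y \<in> T \<Longrightarrow> chernoff_certificate \<gamma> z0 y (r y) (s y) (\<rho> y)"
    and covers: "\<And>\<theta>. \<theta> \<in> \<Theta> (Kstar - 1) \<Longrightarrow> \<exists>y\<in>T. fdist y \<theta> < r y"
    using certified_cover_exists[OF \<gamma> z0] by blast
  have bound: "measure (Pn n) (underfit n) \<le> (\<Sum>y\<in>T. exp ((pen n Kstar + 1) / s y - real n * (R + \<gamma>)))" for n
    using T kl_large by (intro measure_underfit_le[OF z0 T(1,2) certified covers]) auto
  have "(\<lambda>n. pen n Kstar / real n + 1 / real n) \<longlonglongrightarrow> 0 + 0"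
    by (intro tendsto_add pen_sublinear lim_1_over_n)
  then have "(\<lambda>n. (pen n Kstar + 1) / real n) \<longlonglongrightarrow> 0"
    by (simp add: add_divide_distrib)
  then have "eventually (\<lambda>n. (\<Sum>y\<in>T. exp ((pen n Kstar + 1) / s y - real n * \<gamma>)) \<le> 1) sequentially"
    using T(1) \<gamma> certified by (intro eventually_sum_exp_le_1) (auto simp: chernoff_certificate_def)
  then show ?thesis
  proof eventually_elim
    case (elim n)
    have "measure (Pn n) (underfit n) \<le> (\<Sum>y\<in>T. exp (- real n * R) * exp ((pen n Kstar + 1) / s y - real n * \<gamma>))"
      using bound[of n] by (simp add: mult_exp_exp algebra_simps)
    also have "\<dots> \<le> exp (- real n * R)"
      using elim by (simp add: sum_distrib_left[symmetric] mult_left_le)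
    finally show ?case .
  qed
qed

theorem limsup_underfit_le:
  "limsup (\<lambda>n. eln (measure (Pn n) (underfit n)) * ereal (1 / real n))
    \<le> - (INF \<theta>\<in>\<Theta> (Kstar - 1). relent (density mu (p \<theta>)) (density mu (p \<theta>star)))"
proof (rule ereal_le_uminus_if_dense)
  fix R assume "ereal R < (INF \<theta>\<in>\<Theta> (Kstar - 1). relent (density mu (p \<theta>)) (density mu (p \<theta>star)))"
  from ereal_dense2[OF this] obtain R' where
    R': "ereal R < ereal R'" "ereal R' < (INF \<theta>\<in>\<Theta> (Kstar - 1). relent (density mu (p \<theta>)) (density mu (p \<theta>star)))"
    by blast
  have "R + 4 * ((R' - R) / 4) \<le> kl \<theta>" if "\<theta> \<in> \<Theta> (Kstar - 1)" for \<theta>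
  proof -
    have "\<theta> \<in> \<Theta> Kstar"
      using that by (rule lower_in)
    have "ereal R' < (INF \<theta>\<in>\<Theta> (Kstar - 1). relent (density mu (p \<theta>)) (density mu (p \<theta>star)))"
      by (fact R'(2))
    also have "\<dots> \<le> relent (density mu (p \<theta>)) (density mu (p \<theta>star))"
      using that by (rule INF_lower)
    also have "\<dots> = ereal (kl \<theta>)"
      using \<open>\<theta> \<in> \<Theta> Kstar\<close> by (rule relent_eq_kl(2))
    finally have "R' < kl \<theta>" by simp
    then show ?thesis by (simp add: field_simps)
  qed
  then have "eventually (\<lambda>n. measure (Pn n) (underfit n) \<le> exp (- real n * R)) sequentially"
    using R'(1) by (intro eventually_measure_underfit_le[of "(R' - R) / 4"]) auto
  then show "limsup (\<lambda>n. eln (measure (Pn n) (underfit n)) * ereal (1 / real n)) \<le> ereal (- R)"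
    by (intro limsup_eln_le_if_eventually_le_exp measure_nonneg)
qed

end

theorem theorem9:
  fixes Zset :: "'a::euclidean_space set"
    and mu Pstar :: "'a measure"
    and pstar :: "'a \<Rightarrow> real"
    and \<Theta> :: "nat \<Rightarrow> (nat \<Rightarrow> real) set"
    and dim :: "nat \<Rightarrow> nat"
    and p :: "(nat \<Rightarrow> real) \<Rightarrow> 'a \<Rightarrow> real"
    and P :: "(nat \<Rightarrow> real) \<Rightarrow> 'a measure"
    and l u :: "'a \<Rightarrow> real"
    and pen :: "nat \<Rightarrow> nat \<Rightarrow> real"
    and Kstar :: nat
    and t :: "'a \<Rightarrow> nat \<Rightarrow> real"
    and hb :: "'a \<Rightarrow> real"
    and phi :: "(nat \<Rightarrow> real) \<Rightarrow> real"
    and N :: "(nat \<Rightarrow> real) set"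
  assumes Z_borel: "Zset \<in> sets borel"
    and Z_polish: "completely_metrizable_space (top_of_set Zset) \<and> separable_space (top_of_set Zset)"
    and mu_def: "mu = restrict_space lborel Zset"
    and pstar: "pstar \<in> borel_measurable mu" "\<forall>z\<in>Zset. 0 < pstar z"
      "(\<integral>\<^sup>+z. ennreal (pstar z) \<partial>mu) = 1"
    and Pstar_def: "Pstar = density mu (\<lambda>z. ennreal (pstar z))"
    and Theta0: "\<Theta> 0 = {}"
    and nested: "\<forall>K. \<Theta> K \<subseteq> \<Theta> (Suc K)"
    and Theta_Rd: "\<forall>K. \<forall>\<theta>\<in>\<Theta> K. in_Rd (dim K) \<theta>"
    and dens: "\<forall>\<theta>\<in>(\<Union>K. \<Theta> K). p \<theta> \<in> borel_measurable mu \<and> (\<forall>z\<in>Zset. 0 < p \<theta> z)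
                 \<and> (\<integral>\<^sup>+z. ennreal (p \<theta> z) \<partial>mu) = 1"
    and P_def: "\<forall>\<theta>. P \<theta> = density mu (\<lambda>z. ennreal (p \<theta> z))"
    and A1: "\<forall>K. fcompact (\<Theta> K) \<and> weak_compact Zset (P ` \<Theta> K)"
    and A2: "\<forall>K. \<forall>z\<in>Zset. fcontinuous_on (\<Theta> K) (\<lambda>\<theta>. ln (p \<theta> z))"
    and A3: "integrable Pstar (\<lambda>z. u z - l z)"
      "\<forall>z\<in>Zset. l z \<le> ln (pstar z) \<and> ln (pstar z) \<le> u z"
      "\<forall>\<theta>\<in>(\<Union>K. \<Theta> K). \<forall>z\<in>Zset. l z \<le> ln (p \<theta> z) \<and> ln (p \<theta> z) \<le> u z"
    and A4: "\<forall>n K. 1 \<le> K \<longrightarrow> 0 < pen n K"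
      "\<forall>n. mono_on {1..} (pen n)"
      "\<forall>K\<ge>1. filterlim (\<lambda>n. pen n K) at_top sequentially"
      "\<forall>K\<ge>1. (\<lambda>n. pen n K / real n) \<longlonglongrightarrow> 0"
    and Kstar: "1 \<le> Kstar" "Pstar \<in> P ` \<Theta> Kstar" "Pstar \<notin> P ` \<Theta> (Kstar - 1)"
    and H_fin: "\<forall>\<theta>\<in>(\<Union>K. \<Theta> K). relent (P \<theta>) Pstar < \<infinity>
                 \<and> integrable mu (\<lambda>z. p \<theta> z * ln (p \<theta> z))"
    and l_Ltau: "\<forall>\<theta>\<in>(\<Union>K. \<Theta> K). Ltau Pstar (\<lambda>z. ln (p \<theta> z))"
    and cover: "\<forall>K. \<forall>Q\<in>Qset Pstar Zset. \<exists>\<epsilon>0>0. \<forall>\<epsilon>. 0 < \<epsilon> \<and> \<epsilon> \<le> \<epsilon>0 \<longrightarrow>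
                 (\<exists>T. finite T \<and> T \<subseteq> \<Theta> K \<and>
                    (\<forall>\<theta>\<in>\<Theta> K. \<exists>s\<in>T. \<bar>Q (\<lambda>z. ln (p \<theta> z)) - Q (\<lambda>z. ln (p s z))\<bar> \<le> \<epsilon>))"
    and ul_Mtau: "Mtau Pstar (\<lambda>z. u z - l z)"
    and diff: "\<forall>K\<le>Kstar. \<forall>\<theta>\<in>rinterior (dim K) (\<Theta> K).
                 \<exists>ldot :: 'a \<Rightarrow> nat \<Rightarrow> real. (\<forall>i<dim K. Mtau Pstar (\<lambda>z. ldot z i)) \<and>
                 (\<exists>F r \<delta>0. Ltau Pstar F \<and> \<delta>0 > 0 \<and>
                    (\<forall>e>0. \<exists>\<delta>>0. \<forall>h. in_Rd (dim K) h \<and> fnorm h < \<delta> \<longrightarrow> \<bar>r h\<bar> \<le> e * fnorm h) \<and>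
                    (\<forall>h z. in_Rd (dim K) h \<and> fnorm h < \<delta>0 \<and> (\<lambda>i. \<theta> i + h i) \<in> \<Theta> K \<and> z \<in> Zset \<longrightarrow>
                       \<bar>ln (p (\<lambda>i. \<theta> i + h i) z) - ln (p \<theta> z) - (\<Sum>i<dim K. ldot z i * h i)\<bar>
                         \<le> F z * r h))"
    and expo_meas: "hb \<in> borel_measurable mu" "\<forall>i<Kstar. (\<lambda>z. t z i) \<in> borel_measurable mu"
      "\<forall>z\<in>Zset. 0 \<le> hb z"
    and N_def: "N = {\<theta>. in_Rd Kstar \<theta> \<and>
                   (\<integral>\<^sup>+z. ennreal (hb z * exp (\<Sum>i<Kstar. \<theta> i * t z i)) \<partial>mu) < \<infinity>}"
    and N_open: "rinterior Kstar N = N"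
    and phi_def: "\<forall>\<theta>. phi \<theta> = ln (\<integral>z. hb z * exp (\<Sum>i<Kstar. \<theta> i * t z i) \<partial>mu)"
    and dim_Kstar: "dim Kstar = Kstar"
    and Theta_N: "\<Theta> Kstar \<subseteq> N" "fconvex (\<Theta> Kstar)"
    and expo: "\<forall>\<theta>\<in>\<Theta> Kstar. \<forall>z\<in>Zset.
                 p \<theta> z = hb z * exp ((\<Sum>i<Kstar. \<theta> i * t z i) - phi \<theta>)"
    and crit_meas: "\<forall>n K. (\<lambda>zs. crit \<Theta> p pen n zs K) \<in> borel_measurable (PiM {..<n} (\<lambda>_. Pstar))"
  shows "limsup (\<lambda>n. eln (measure (PiM {..<n} (\<lambda>_. Pstar))
              {zs \<in> space (PiM {..<n} (\<lambda>_. Pstar)). \<exists>K<Kstar. is_Khat \<Theta> p pen n zs K})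
            * ereal (1 / real n))
         \<le> - (INF Q\<in>P ` \<Theta> (Kstar - 1). relent Q Pstar)"
proof -
  obtain \<theta>star where \<theta>star: "\<theta>star \<in> \<Theta> Kstar" "Pstar = P \<theta>star"
    using Kstar(2) by auto
  have Zset: "Zset = space mu"
    unfolding mu_def by (simp add: space_restrict_space)
  interpret exp_family_order_selection mu hb t Kstar phi \<Theta> p pen u \<theta>star
  proof unfold_locales
    show "\<Theta> Kstar \<subseteq> rinterior Kstar
        {\<theta>. in_Rd Kstar \<theta> \<and> (\<integral>\<^sup>+z. ennreal (hb z * exp (\<Sum>i<Kstar. \<theta> i * t z i)) \<partial>mu) < \<infinity>}"
      using Theta_N(1) N_open unfolding N_def by simp
    show "relent (density mu (p \<theta>)) (density mu (p \<theta>star)) < \<infinity>" if "\<theta> \<in> \<Theta> Kstar" for \<theta>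
      using H_fin that \<theta>star(2) by (auto simp: P_def)
    show "in_Rd Kstar \<theta>" if "\<theta> \<in> \<Theta> Kstar" for \<theta>
      using Theta_Rd dim_Kstar that by metis
    show "0 \<le> pen n K" if "0 < K" for n K
      using A4(1) that by (simp add: Suc_le_eq less_imp_le)
    show "p \<theta> z = hb z * exp ((\<Sum>i<Kstar. \<theta> i * t z i) - phi \<theta>)"
      if "\<theta> \<in> \<Theta> Kstar" "z \<in> space mu" for \<theta> z
      using expo that Zset by blast
  qed (use expo_meas Theta_N nested \<theta>star A1 A2 A3(3) A4(4) Kstar(1) dens Zset in auto)
  have "(INF Q\<in>P ` \<Theta> (Kstar - 1). relent Q Pstar)
      = (INF \<theta>\<in>\<Theta> (Kstar - 1). relent (density mu (p \<theta>)) (density mu (p \<theta>star)))"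
    using \<theta>star(2) P_def by (simp add: image_image)
  then show ?thesis
    using limsup_underfit_le \<theta>star(2) P_def by (simp add: underfit_def)
qed

end
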